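(* The language $L\subseteq\{a,b\}^*$ given by the regular expression $(a(ab)^*b)^*$ is definable in $FO[<]$ but not in $FO^2[<,\mathrm{Inv}]$.
   Context: $FO[<]$ is first-order logic over finite words with the order $<$ on positions and unary predicates $a(x)$ (letter at position $x$ is $a$). $FO^2[<,\mathrm{Inv}]$ is its two-variable fragment extended by binary predicates $a(x,y)$ meaning $\exists z(x<z\wedge z<y\wedge a(z))$ (only two variables may be used in formulas). A language is definable in a logic if it is the set of words satisfying some sentence of that logic. *)

theory Defs
  imports Main
begin

datatype letter = A | B

type_synonym word = "letter list"

inductive_set kleene_star :: "word set \<Rightarrow> word set" for L :: "word set" where
  star_nil: "[] \<in> kleene_star L"
| star_app: "u \<in> L \<Longrightarrow> v \<in> kleene_star L \<Longrightarrow> u @ v \<in> kleene_star L"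

definition block_lang :: "word set" where
  "block_lang = {[A] @ concat (replicate n [A, B]) @ [B] | n. True}"

definition L_lang :: "word set" where
  "L_lang = kleene_star block_lang"

datatype fo =
    FLt nat nat
  | FEq nat nat
  | FLet letter nat
  | FNot fo
  | FAnd fo fo
  | FEx nat fo

fun fo_fv :: "fo \<Rightarrow> nat set" where
  "fo_fv (FLt x y) = {x, y}"
| "fo_fv (FEq x y) = {x, y}"
| "fo_fv (FLet c x) = {x}"
| "fo_fv (FNot \<phi>) = fo_fv \<phi>"
| "fo_fv (FAnd \<phi> \<psi>) = fo_fv \<phi> \<union> fo_fv \<psi>"
| "fo_fv (FEx x \<phi>) = fo_fv \<phi> - {x}"

fun fo_sat :: "word \<Rightarrow> (nat \<Rightarrow> nat) \<Rightarrow> fo \<Rightarrow> bool" where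
  "fo_sat w s (FLt x y) = (s x < s y)"
| "fo_sat w s (FEq x y) = (s x = s y)"
| "fo_sat w s (FLet c x) = (s x < length w \<and> w ! s x = c)"
| "fo_sat w s (FNot \<phi>) = (\<not> fo_sat w s \<phi>)"
| "fo_sat w s (FAnd \<phi> \<psi>) = (fo_sat w s \<phi> \<and> fo_sat w s \<psi>)"
| "fo_sat w s (FEx x \<phi>) = (\<exists>i < length w. fo_sat w (s(x := i)) \<phi>)"

definition fo_definable :: "word set \<Rightarrow> bool" where
  "fo_definable L \<longleftrightarrow>
     (\<exists>\<phi>. fo_fv \<phi> = {} \<and> (\<forall>w. w \<in> L \<longleftrightarrow> fo_sat w (\<lambda>_. 0) \<phi>))"

text \<open>Exactly two variables X and Y (which may be requantified).
  FBetween c x y means: exists z with x < z < y and letter c at z.\<close>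

datatype var2 = X | Y

datatype fo2 =
    F2Lt var2 var2
  | F2Eq var2 var2
  | F2Let letter var2
  | F2Between letter var2 var2
  | F2Not fo2
  | F2And fo2 fo2
  | F2Ex var2 fo2

fun fo2_fv :: "fo2 \<Rightarrow> var2 set" where
  "fo2_fv (F2Lt x y) = {x, y}"
| "fo2_fv (F2Eq x y) = {x, y}"
| "fo2_fv (F2Let c x) = {x}"
| "fo2_fv (F2Between c x y) = {x, y}"
| "fo2_fv (F2Not \<phi>) = fo2_fv \<phi>"
| "fo2_fv (F2And \<phi> \<psi>) = fo2_fv \<phi> \<union> fo2_fv \<psi>"
| "fo2_fv (F2Ex x \<phi>) = fo2_fv \<phi> - {x}"

fun fo2_sat :: "word \<Rightarrow> (var2 \<Rightarrow> nat) \<Rightarrow> fo2 \<Rightarrow> bool" where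
  "fo2_sat w s (F2Lt x y) = (s x < s y)"
| "fo2_sat w s (F2Eq x y) = (s x = s y)"
| "fo2_sat w s (F2Let c x) = (s x < length w \<and> w ! s x = c)"
| "fo2_sat w s (F2Between c x y) =
     (\<exists>z. s x < z \<and> z < s y \<and> z < length w \<and> w ! z = c)"
| "fo2_sat w s (F2Not \<phi>) = (\<not> fo2_sat w s \<phi>)"
| "fo2_sat w s (F2And \<phi> \<psi>) = (fo2_sat w s \<phi> \<and> fo2_sat w s \<psi>)"
| "fo2_sat w s (F2Ex x \<phi>) = (\<exists>i < length w. fo2_sat w (s(x := i)) \<phi>)"

definition fo2_inv_definable :: "word set \<Rightarrow> bool" where
  "fo2_inv_definable L \<longleftrightarrow>
     (\<exists>\<phi>. fo2_fv \<phi> = {} \<and> (\<forall>w. w \<in> L \<longleftrightarrow> fo2_sat w (\<lambda>_. 0) \<phi>))"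

end

theory Submission
  imports Defs
begin

text \<open>Words of L are exactly the words that start with A, end with B, have even length and in
  which the letters at positions 2i+1 and 2i+2 differ. Parity of a position is not first-order
  definable, but within such a word it can be read off from the last doubling (two equal adjacent
  letters) before the position, and this gives a first-order sentence for L.

  For FO^2[<,Inv] we use an Ehrenfeucht-Fraisse argument. Take tiles of odd length h, each a
  marker letter followed by ABAB...B; with alternating markers the tiles form a word u of L.
  Inserting one tile in the middle of u so that two consecutive markers are A gives a word v
  outside L. Every letter has both letters within distance 2, so Between predicates only carry
  information about short distances, and every window of radius below h/2 of either word occurs
  in u near each end. Hence the duplicator survives K rounds of the two-pebble game: moves close
  to the other pebble are copied, moves far away are answered near the matching end.\<close>

section \<open>The shape of L\<close>

definition L_shape :: "word \<Rightarrow> bool" where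
  "L_shape w \<longleftrightarrow> (w \<noteq> [] \<longrightarrow> w!0 = A \<and> w!(length w - 1) = B \<and> even (length w))
     \<and> (\<forall>j. odd j \<longrightarrow> j+1 < length w \<longrightarrow> w!j \<noteq> w!(j+1))"

definition block :: "nat \<Rightarrow> word" where
  "block n = [A] @ concat (replicate n [A, B]) @ [B]"

lemma length_concat_replicate_AB: "length (concat (replicate n [A, B])) = 2*n"
  by (induction n) auto

lemma nth_concat_replicate_AB:
  "j < 2*n \<Longrightarrow> concat (replicate n [A, B]) ! j = (if even j then A else B)"
proof (induction n arbitrary: j)
  case 0 then show ?case by simp
next
  case (Suc n)
  show ?case
  proof (cases "j < 2")
    case True
    then show ?thesis by (cases j) (auto simp: nth_append)
  next
    case False
    then have "concat (replicate (Suc n) [A, B]) ! j = concat (replicate n [A, B]) ! (j - 2)"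
      by (simp add: nth_append numeral_2_eq_2)
    also have "\<dots> = (if even (j-2) then A else B)" using Suc False by simp
    finally show ?thesis using False by auto
  qed
qed

lemma length_block: "length (block n) = 2*n+2"
  unfolding block_def by (simp add: length_concat_replicate_AB)

lemma nth_block:
  "j < 2*n+2 \<Longrightarrow>
    block n ! j = (if j = 0 then A else if j = 2*n+1 then B else if odd j then A else B)"
  unfolding block_def
  by (auto simp: nth_append nth_Cons' length_concat_replicate_AB nth_concat_replicate_AB)

lemma block_lang_eq_range: "block_lang = range block"
  unfolding block_lang_def block_def by auto

lemma L_shape_Nil: "L_shape []" unfolding L_shape_def by simp

lemma L_shape_block_append:
  assumes v: "L_shape v"
  shows "L_shape (block n @ v)"
  unfolding L_shape_def
proof (intro conjI impI allI)
  let ?w = "block n @ v"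
  have lw: "length ?w = 2*n+2 + length v" by (simp add: length_block)
  show "?w!0 = A" using nth_block[of 0 n] by (simp add: nth_append length_block)
  show "?w!(length ?w - 1) = B"
  proof (cases "v = []")
    case True then show ?thesis using nth_block[of "2*n+1" n] by (simp add: length_block)
  next
    case False
    then have "v!(length v - 1) = B" using v unfolding L_shape_def by simp
    then show ?thesis using False by (simp add: nth_append length_block)
  qed
  show "even (length ?w)"
    using v unfolding L_shape_def by (cases "v = []") (auto simp: length_block)
  fix j assume j: "odd j" "j + 1 < length ?w"
  consider "j + 1 < 2*n+2" | "j + 1 = 2*n+2" | "j \<ge> 2*n+2" by linarith
  then show "?w!j \<noteq> ?w!(j+1)"
  proof cases
    case 1
    then show ?thesis
      using j nth_block[of j n] nth_block[of "j+1" n] by (auto simp: nth_append length_block)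
  next
    case 2
    then have "v \<noteq> []" using j lw by auto
    then have "v!0 = A" using v unfolding L_shape_def by simp
    then show ?thesis using 2 nth_block[of j n] by (auto simp: nth_append length_block)
  next
    case 3
    define i where "i = j - (2*n+2)"
    have "odd i" using j 3 unfolding i_def by auto
    moreover have "i + 1 < length v" using j 3 lw unfolding i_def by auto
    ultimately have "v!i \<noteq> v!(i+1)" using v unfolding L_shape_def by blast
    moreover have "j = length (block n) + i" "j+1 = length (block n) + (i+1)"
      using 3 unfolding i_def
      by (auto simp: length_block)
    then have "?w!j = v!i" "?w!(j+1) = v!(i+1)" by (metis nth_append_length_plus)+
    ultimately show ?thesis by simp
  qed
qed

lemma L_lang_imp_L_shape: "w \<in> L_lang \<Longrightarrow> L_shape w"
  unfolding L_lang_def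
proof (induction rule: kleene_star.induct)
  case star_nil then show ?case by (rule L_shape_Nil)
next
  case (star_app u v)
  then obtain n where "u = block n" unfolding block_lang_eq_range by auto
  then show ?case using L_shape_block_append star_app by simp
qed

lemma L_shape_drop:
  assumes P: "L_shape w" and k: "even k" "0 < k" "k \<le> length w" "w!(k-1) = B"
  shows "L_shape (drop k w)"
  unfolding L_shape_def
proof (intro conjI impI allI)
  assume ne: "drop k w \<noteq> []"
  then have kl: "k < length w" by simp
  have "odd (k-1)" using k by simp
  moreover have "k - 1 + 1 = k" using k by simp
  ultimately have "w!(k-1) \<noteq> w!k" using P kl unfolding L_shape_def by metis
  then have "w!k \<noteq> B" using k(4) by simp
  then have "w!k = A" by (cases "w!k") auto
  then show "drop k w ! 0 = A" using kl by simp
  have "w \<noteq> []" using kl by auto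
  then have "w!(length w - 1) = B" "even (length w)" using P unfolding L_shape_def by auto
  then show "drop k w ! (length (drop k w) - 1) = B" using kl by (simp add: nth_drop)
  show "even (length (drop k w))" using \<open>even (length w)\<close> k by simp
next
  fix j assume j: "odd j" "j+1 < length (drop k w)"
  have "odd (k + j)" using j k by simp
  moreover have "k + j + 1 < length w" using j by simp
  ultimately have "w!(k+j) \<noteq> w!(k+j+1)" using P unfolding L_shape_def by blast
  then show "drop k w ! j \<noteq> drop k w ! (j+1)" using j by (simp add: nth_drop add.assoc)
qed

lemma L_shape_first_block:
  assumes P: "L_shape w" and ne: "w \<noteq> []"
  obtains n where "take (2*n+2) w = block n" "2*n+2 \<le> length w" "w!(2*n+1) = B"
proof -
  have first: "w!0 = A" and last: "w!(length w - 1) = B" and ev: "even (length w)"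
    and alt: "\<And>j. odd j \<Longrightarrow> j+1 < length w \<Longrightarrow> w!j \<noteq> w!(j+1)"
    using P ne unfolding L_shape_def by auto
  define S where "S = {i. 2*i+1 < length w \<and> w!(2*i+1) = B}"
  have "(length w - 2) div 2 \<in> S"
  proof -
    have "2*((length w - 2) div 2) + 1 = length w - 1" using ev ne by (cases "length w") auto
    then show ?thesis using last ne unfolding S_def by auto
  qed
  define n where "n = (LEAST i. i \<in> S)"
  have nS: "n \<in> S" unfolding n_def by (rule LeastI) fact
  then have n_B: "w!(2*n+1) = B" and "2*n+1 < length w" unfolding S_def by auto
  then have n_len: "2*n+2 \<le> length w" using ev by presburger
  have odd_A: "w!(2*l+1) = A" if "l < n" for l
  proof -
    have "l \<notin> S" using that not_less_Least unfolding n_def by blast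
    then show ?thesis using that n_len unfolding S_def by (cases "w!(2*l+1)") auto
  qed
  have even_B: "w!(2*l+2) = B" if "l < n" for l
    using alt[of "2*l+1"] odd_A[OF that] that n_len by (cases "w!(2*l+2)") auto
  have "take (2*n+2) w ! j = block n ! j" if j: "j < 2*n+2" for j
  proof -
    consider "j = 0" | "j = 2*n+1" | l where "j = 2*l+1" "l < n" | l where "j = 2*l+2" "l < n"
    proof (cases "odd j")
      case True
      then obtain l where "j = 2*l+1" by (blast elim: oddE)
      then show thesis using j that(2,3) by (cases "l < n") auto
    next
      case False
      then obtain l where "j = 2*l" by (blast elim: evenE)
      then show thesis using j that(1) that(4)[of "l-1"] by (cases l) auto
    qed
    then show ?thesis
      using j n_len first n_B odd_A even_B nth_block[OF j] by cases auto
  qed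
  then have "take (2*n+2) w = block n"
    using n_len by (intro nth_equalityI) (auto simp: length_block)
  then show thesis using that n_len n_B by blast
qed

lemma L_shape_imp_L_lang: "L_shape w \<Longrightarrow> w \<in> L_lang"
proof (induction "length w" arbitrary: w rule: less_induct)
  case less
  show ?case
  proof (cases "w = []")
    case True
    then show ?thesis unfolding L_lang_def by (simp add: kleene_star.star_nil)
  next
    case False
    then obtain n where n: "take (2*n+2) w = block n" "2*n+2 \<le> length w" "w!(2*n+1) = B"
      using L_shape_first_block less.prems by blast
    have "drop (2*n+2) w \<in> L_lang"
      using less.hyps L_shape_drop[OF less.prems, of "2*n+2"] n(2,3) by simp
    moreover have "block n \<in> block_lang" unfolding block_lang_eq_range by simp
    ultimately show ?thesis
      using n(1) append_take_drop_id[of "2*n+2" w] unfolding L_lang_def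
      by (metis kleene_star.star_app)
  qed
qed

lemma L_lang_iff_L_shape: "w \<in> L_lang \<longleftrightarrow> L_shape w"
  using L_lang_imp_L_shape L_shape_imp_L_lang by blast

section \<open>First-order definability\<close>

definition fo_or :: "fo \<Rightarrow> fo \<Rightarrow> fo" where "fo_or \<phi> \<psi> = FNot (FAnd (FNot \<phi>) (FNot \<psi>))"
definition fo_imp :: "fo \<Rightarrow> fo \<Rightarrow> fo" where "fo_imp \<phi> \<psi> = fo_or (FNot \<phi>) \<psi>"
definition fo_all :: "nat \<Rightarrow> fo \<Rightarrow> fo" where "fo_all x \<phi> = FNot (FEx x (FNot \<phi>))"

lemma fo_sat_or [simp]: "fo_sat w s (fo_or \<phi> \<psi>) \<longleftrightarrow> fo_sat w s \<phi> \<or> fo_sat w s \<psi>"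
  unfolding fo_or_def by simp

lemma fo_sat_imp [simp]: "fo_sat w s (fo_imp \<phi> \<psi>) \<longleftrightarrow> (fo_sat w s \<phi> \<longrightarrow> fo_sat w s \<psi>)"
  unfolding fo_imp_def by simp

lemma fo_sat_all [simp]: "fo_sat w s (fo_all x \<phi>) \<longleftrightarrow> (\<forall>i<length w. fo_sat w (s(x:=i)) \<phi>)"
  unfolding fo_all_def by simp

definition fo_at_first :: "nat \<Rightarrow> nat \<Rightarrow> fo \<Rightarrow> fo" where
  "fo_at_first x y \<phi> = fo_all x (fo_imp (FNot (FEx y (FLt y x))) \<phi>)"

definition fo_at_last :: "nat \<Rightarrow> nat \<Rightarrow> fo \<Rightarrow> fo" where
  "fo_at_last x y \<phi> = fo_all x (fo_imp (FNot (FEx y (FLt x y))) \<phi>)"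

lemma fo_sat_at_first:
  assumes "x \<noteq> y"
  shows "fo_sat w s (fo_at_first x y \<phi>) \<longleftrightarrow> (w \<noteq> [] \<longrightarrow> fo_sat w (s(x:=0)) \<phi>)"
proof -
  have "(\<not> (\<exists>j<length w. j < i)) \<longleftrightarrow> i = 0" if "i < length w" for i
    using that by (auto dest: spec[of _ 0])
  then show ?thesis
    using assms unfolding fo_at_first_def by simp
qed

lemma fo_sat_at_last:
  assumes "x \<noteq> y"
  shows "fo_sat w s (fo_at_last x y \<phi>) \<longleftrightarrow> (w \<noteq> [] \<longrightarrow> fo_sat w (s(x:=length w - 1)) \<phi>)"
proof -
  have "(\<not> (\<exists>j<length w. i < j)) \<longleftrightarrow> i = length w - 1" if "i < length w" for i
    using that by (auto dest: spec[of _ "length w - 1"])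
  then show ?thesis
    using assms unfolding fo_at_last_def by (cases "w = []") simp_all
qed

definition fo_succ :: "nat \<Rightarrow> nat \<Rightarrow> nat \<Rightarrow> fo" where
  "fo_succ x y z = FAnd (FLt x y) (FNot (FEx z (FAnd (FLt x z) (FLt z y))))"

definition fo_same :: "nat \<Rightarrow> nat \<Rightarrow> fo" where
  "fo_same x y = fo_or (FAnd (FLet A x) (FLet A y)) (FAnd (FLet B x) (FLet B y))"

definition fo_doubled :: "nat \<Rightarrow> nat \<Rightarrow> nat \<Rightarrow> fo" where
  "fo_doubled x y z = FEx y (FAnd (fo_succ x y z) (fo_same x y))"

definition fo_same_as_succ :: "nat \<Rightarrow> nat \<Rightarrow> nat \<Rightarrow> nat \<Rightarrow> fo" where
  "fo_same_as_succ j i m n = FEx m (FAnd (fo_succ j m n) (fo_same i m))"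

lemma fo_sat_succ:
  assumes "z \<noteq> x" "z \<noteq> y" "s y < length w"
  shows "fo_sat w s (fo_succ x y z) \<longleftrightarrow> s y = Suc (s x)"
proof -
  have "fo_sat w s (fo_succ x y z) \<longleftrightarrow> s x < s y \<and> \<not> (\<exists>i<length w. s x < i \<and> i < s y)"
    using assms unfolding fo_succ_def by simp
  also have "\<dots> \<longleftrightarrow> s y = Suc (s x)"
    using assms(3) by (auto dest: Suc_lessI)
  finally show ?thesis .
qed

lemma fo_sat_same:
  "fo_sat w s (fo_same x y) \<longleftrightarrow> s x < length w \<and> s y < length w \<and> w!(s x) = w!(s y)"
  unfolding fo_same_def by (cases "w!(s x)"; cases "w!(s y)") auto

definition doubled :: "word \<Rightarrow> nat \<Rightarrow> bool" where
  "doubled w q \<longleftrightarrow> q + 1 < length w \<and> w!q = w!(q+1)"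

lemma fo_sat_doubled:
  assumes "x \<noteq> y" "y \<noteq> z" "x \<noteq> z"
  shows "fo_sat w s (fo_doubled x y z) \<longleftrightarrow> doubled w (s x)"
  using assms unfolding fo_doubled_def doubled_def by (auto simp: fo_sat_succ fo_sat_same)

lemma fo_sat_same_as_succ:
  assumes "j \<noteq> m" "m \<noteq> n" "j \<noteq> n" "i \<noteq> m" "s i < length w"
  shows "fo_sat w s (fo_same_as_succ j i m n) \<longleftrightarrow> Suc (s j) < length w \<and> w!(s i) = w!(Suc (s j))"
  using assms unfolding fo_same_as_succ_def by (auto simp: fo_sat_succ fo_sat_same)

text \<open>A first-order surrogate for parity: p counts as odd if w!p is the letter following the
  last doubling before p or, if there is none, if w!p = B. For a word starting with A this is the
  parity of p as long as all doublings before p sit at even positions.\<close>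

definition odd_by_doublings :: "word \<Rightarrow> nat \<Rightarrow> bool" where
  "odd_by_doublings w p \<longleftrightarrow>
     (\<exists>q<p. doubled w q \<and> (\<forall>r. q < r \<and> r < p \<longrightarrow> \<not> doubled w r) \<and> w!p = w!(q+1))
     \<or> ((\<forall>q<p. \<not> doubled w q) \<and> w!p = B)"

definition fo_odd_by_doublings :: "nat \<Rightarrow> nat \<Rightarrow> nat \<Rightarrow> nat \<Rightarrow> nat \<Rightarrow> fo" where
  "fo_odd_by_doublings i j k m n = fo_or
     (FEx j (FAnd (FLt j i) (FAnd (fo_doubled j m n)
        (FAnd (FNot (FEx k (FAnd (FLt j k) (FAnd (FLt k i) (fo_doubled k m n)))))
          (fo_same_as_succ j i m n)))))
     (FAnd (FNot (FEx j (FAnd (FLt j i) (fo_doubled j m n)))) (FLet B i))"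

lemma fo_sat_odd_by_doublings:
  assumes d: "distinct [i, j, k, m, n]" and i: "s i < length w"
  shows "fo_sat w s (fo_odd_by_doublings i j k m n) \<longleftrightarrow> odd_by_doublings w (s i)"
proof -
  have dbl_j: "fo_sat w (s(j:=q)) (fo_doubled j m n) \<longleftrightarrow> doubled w q" for q
    using fo_sat_doubled[of j m n w "s(j:=q)"] d by simp
  have dbl_k: "fo_sat w (s(j:=q, k:=r)) (fo_doubled k m n) \<longleftrightarrow> doubled w r" for q r
    using fo_sat_doubled[of k m n w "s(j:=q, k:=r)"] d by simp
  have succ: "fo_sat w (s(j:=q)) (fo_same_as_succ j i m n) \<longleftrightarrow> Suc q < length w \<and> w!(s i) = w!(Suc q)" for q
    using fo_sat_same_as_succ[of j m n i "s(j:=q)" w] d i by auto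
  have bex: "(\<exists>q<length w. q < s i \<and> P q) \<longleftrightarrow> (\<exists>q<s i. P q)" for P
    using i by (auto dest: order.strict_trans)
  have bex_between: "(\<exists>r<length w. q < r \<and> r < s i \<and> P r) \<longleftrightarrow> (\<exists>r. q < r \<and> r < s i \<and> P r)" for q P
    using i by (auto dest: order.strict_trans)
  have "doubled w q \<Longrightarrow> Suc q < length w" for q unfolding doubled_def by simp
  then show ?thesis
    using d i unfolding fo_odd_by_doublings_def odd_by_doublings_def
    by (simp add: dbl_j dbl_k succ bex bex_between) blast
qed

definition L_shape_by_doublings :: "word \<Rightarrow> bool" where
  "L_shape_by_doublings w \<longleftrightarrow>
     (w \<noteq> [] \<longrightarrow> w!0 = A \<and> w!(length w - 1) = B \<and> odd_by_doublings w (length w - 1))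
     \<and> (\<forall>p. p+1 < length w \<longrightarrow> odd_by_doublings w p \<longrightarrow> w!p \<noteq> w!(p+1))"

definition L_sentence :: fo where
  "L_sentence =
     FAnd (fo_at_first 0 1 (FLet A 0))
    (FAnd (fo_at_last 0 1 (FAnd (FLet B 0) (fo_odd_by_doublings 0 1 2 3 4)))
          (fo_all 0 (fo_all 1 (fo_imp (FAnd (fo_succ 0 1 2) (fo_odd_by_doublings 0 2 3 4 5))
                                      (FNot (fo_same 0 1))))))"

lemma L_sentence_closed: "fo_fv L_sentence = {}"
  unfolding L_sentence_def fo_at_first_def fo_at_last_def fo_all_def fo_or_def fo_imp_def
    fo_succ_def fo_same_def fo_doubled_def fo_odd_by_doublings_def fo_same_as_succ_def
  by auto

lemma fo_sat_L_sentence: "fo_sat w s L_sentence \<longleftrightarrow> L_shape_by_doublings w"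
proof -
  have "fo_sat w s L_sentence \<longleftrightarrow>
      (w \<noteq> [] \<longrightarrow> w!0 = A) \<and>
      (w \<noteq> [] \<longrightarrow> w!(length w - 1) = B \<and> odd_by_doublings w (length w - 1)) \<and>
      (\<forall>p<length w. \<forall>q<length w. q = Suc p \<and> odd_by_doublings w p \<longrightarrow> w!p \<noteq> w!q)"
    unfolding L_sentence_def
    by (simp add: fo_sat_at_first fo_sat_at_last fo_sat_odd_by_doublings fo_sat_succ fo_sat_same)
  then show ?thesis unfolding L_shape_by_doublings_def by auto
qed

lemma alternating_segment:
  assumes "\<forall>r. a \<le> r \<and> r < a + l \<longrightarrow> \<not> doubled w r" and "a + l < length w"
  shows "w!(a+l) = w!a \<longleftrightarrow> even l"
  using assms
proof (induction l)
  case 0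
  then show ?case by simp
next
  case (Suc l)
  then have "w!(a+l) = w!a \<longleftrightarrow> even l" by simp
  moreover have "w!(a+l) \<noteq> w!(a + Suc l)"
    using Suc.prems unfolding doubled_def by (auto dest: spec[of _ "a+l"])
  ultimately show ?case by (cases "w!(a+l)"; cases "w!(a+Suc l)"; cases "w!a") auto
qed

lemma odd_by_doublings_iff_odd:
  assumes first: "w!0 = A" and p: "p < length w" and ev: "\<forall>q<p. doubled w q \<longrightarrow> even q"
  shows "odd_by_doublings w p \<longleftrightarrow> odd p"
proof (cases "\<exists>q<p. doubled w q")
  case True
  define q0 where "q0 = Max {q. q < p \<and> doubled w q}"
  have q0: "q0 < p" "doubled w q0" and after: "\<forall>r. q0 < r \<and> r < p \<longrightarrow> \<not> doubled w r"
    using True Max_in[of "{q. q < p \<and> doubled w q}"] Max_ge[of "{q. q < p \<and> doubled w q}"]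
    unfolding q0_def by (auto simp: not_le)
  have "q = q0" if "q < p" "doubled w q" "\<forall>r. q < r \<and> r < p \<longrightarrow> \<not> doubled w r" for q
    using that q0 after by (metis linorder_neqE_nat)
  then have "odd_by_doublings w p \<longleftrightarrow> w!p = w!(q0+1)"
    unfolding odd_by_doublings_def using q0 after by blast
  also have "\<dots> \<longleftrightarrow> even (p - (q0+1))"
    using alternating_segment[of "q0+1" "p - (q0+1)" w] q0 after p by auto
  also have "\<dots> \<longleftrightarrow> odd p"
    using q0 ev by (simp add: even_diff_nat)
  finally show ?thesis .
next
  case False
  then have "w!p = w!0 \<longleftrightarrow> even p"
    using alternating_segment[of 0 p w] p by auto
  then show ?thesis
    using False first unfolding odd_by_doublings_def by (cases "w!p") auto
qed

lemma L_shape_iff_doublings_even: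
  "L_shape w \<longleftrightarrow> (w \<noteq> [] \<longrightarrow> w!0 = A \<and> w!(length w - 1) = B \<and> even (length w))
                 \<and> (\<forall>q. doubled w q \<longrightarrow> even q)"
  unfolding L_shape_def doubled_def by auto

lemma L_shape_by_doublings_iff_L_shape: "L_shape_by_doublings w \<longleftrightarrow> L_shape w"
proof (cases "w = []")
  case True
  then show ?thesis unfolding L_shape_by_doublings_def L_shape_def by simp
next
  case ne: False
  have parity: "odd_by_doublings w p \<longleftrightarrow> odd p"
    if "w!0 = A" "p < length w" "\<forall>q. doubled w q \<longrightarrow> even q" for p
    using odd_by_doublings_iff_odd that by blast
  show ?thesis
  proof
    assume S: "L_shape_by_doublings w"
    then have first: "w!0 = A" and last: "w!(length w - 1) = B" "odd_by_doublings w (length w - 1)"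
      and step: "\<And>p. p+1 < length w \<Longrightarrow> odd_by_doublings w p \<Longrightarrow> w!p \<noteq> w!(p+1)"
      using ne unfolding L_shape_by_doublings_def by auto
    have even_doublings: "\<forall>q. doubled w q \<longrightarrow> even q"
    proof (rule ccontr)
      assume "\<not> (\<forall>q. doubled w q \<longrightarrow> even q)"
      then have ex: "\<exists>q. doubled w q \<and> odd q" by auto
      define q where "q = (LEAST q. doubled w q \<and> odd q)"
      have q: "doubled w q" "odd q" using LeastI_ex[OF ex] unfolding q_def by auto
      have "\<forall>q'<q. doubled w q' \<longrightarrow> even q'" using not_less_Least unfolding q_def by blast
      then have "odd_by_doublings w q"
        using odd_by_doublings_iff_odd[OF first] q unfolding doubled_def by simp
      then show False using step q unfolding doubled_def by auto
    qed
    have "even (length w)"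
      using parity[OF first _ even_doublings, of "length w - 1"] last ne by (cases "length w") auto
    then show "L_shape w"
      unfolding L_shape_iff_doublings_even using first last even_doublings by simp
  next
    assume "L_shape w"
    then have first: "w!0 = A" and last: "w!(length w - 1) = B" "even (length w)"
      and even_doublings: "\<forall>q. doubled w q \<longrightarrow> even q"
      using ne unfolding L_shape_iff_doublings_even by auto
    have "odd_by_doublings w (length w - 1)"
      using parity[OF first _ even_doublings, of "length w - 1"] last ne by (cases "length w") auto
    moreover have "w!p \<noteq> w!(p+1)" if "p+1 < length w" "odd_by_doublings w p" for p
      using that parity[OF first _ even_doublings, of p] even_doublings
        unfolding doubled_def by auto
    ultimately show "L_shape_by_doublings w"
      unfolding L_shape_by_doublings_def using first last by simp
  qed
qed

theorem fo_definable_L_lang: "fo_definable L_lang"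
  unfolding fo_definable_def
  using L_sentence_closed fo_sat_L_sentence L_shape_by_doublings_iff_L_shape L_lang_iff_L_shape
  by blast

section \<open>The two-pebble game for FO^2[<,Inv]\<close>

fun qdepth :: "fo2 \<Rightarrow> nat" where
  "qdepth (F2Not \<phi>) = qdepth \<phi>"
| "qdepth (F2And \<phi> \<psi>) = max (qdepth \<phi>) (qdepth \<psi>)"
| "qdepth (F2Ex x \<phi>) = Suc (qdepth \<phi>)"
| "qdepth _ = 0"

definition nbhd_agree :: "word \<Rightarrow> nat \<Rightarrow> word \<Rightarrow> nat \<Rightarrow> bool" where
  "nbhd_agree u p v p' \<longleftrightarrow>
     (\<forall>d\<le>3. (p + d < length u \<longleftrightarrow> p' + d < length v) \<and> (p + d < length u \<longrightarrow> u!(p+d) = v!(p'+d)))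
   \<and> (\<forall>d\<le>3. (d \<le> p \<longleftrightarrow> d \<le> p') \<and> (d \<le> p \<longrightarrow> u!(p-d) = v!(p'-d)))"

text \<open>Positions p of u and p' of v that the duplicator can defend for k rounds of the
  two-pebble game in which the pebble not on p moves: moves within distance 3 are answered at
  the same offset, moves further out are answered further out on the same side.\<close>

fun ef_equiv :: "nat \<Rightarrow> word \<Rightarrow> nat \<Rightarrow> word \<Rightarrow> nat \<Rightarrow> bool" where
  "ef_equiv 0 u p v p' = nbhd_agree u p v p'"
| "ef_equiv (Suc k) u p v p' = (nbhd_agree u p v p' \<and>
    (\<forall>d\<le>3. p + d < length u \<longrightarrow> ef_equiv k u (p+d) v (p'+d)) \<and>
    (\<forall>d\<le>3. d \<le> p \<longrightarrow> ef_equiv k u (p-d) v (p'-d)) \<and>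
    (\<forall>q<length u. q + 3 < p \<longrightarrow> (\<exists>q'<length v. q' + 3 < p' \<and> ef_equiv k u q v q')) \<and>
    (\<forall>q'<length v. q' + 3 < p' \<longrightarrow> (\<exists>q<length u. q + 3 < p \<and> ef_equiv k u q v q')) \<and>
    (\<forall>q<length u. p + 3 < q \<longrightarrow> (\<exists>q'<length v. p' + 3 < q' \<and> ef_equiv k u q v q')) \<and>
    (\<forall>q'<length v. p' + 3 < q' \<longrightarrow> (\<exists>q<length u. p + 3 < q \<and> ef_equiv k u q v q')))"

declare ef_equiv.simps(2) [simp del]

definition same_order3 :: "nat \<Rightarrow> nat \<Rightarrow> nat \<Rightarrow> nat \<Rightarrow> bool" where
  "same_order3 a b a' b' \<longleftrightarrow> (a < b \<longleftrightarrow> a' < b') \<and>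
     (\<forall>d\<le>3. (b = a + d \<longleftrightarrow> b' = a' + d) \<and> (a = b + d \<longleftrightarrow> a' = b' + d))"

text \<open>In a word in which every factor of length 3 contains both letters, a Between
  predicate whose endpoints are more than 3 apart is true, so it carries no information.\<close>

definition dense_letters :: "word \<Rightarrow> bool" where
  "dense_letters w \<longleftrightarrow> (\<forall>i c. i + 2 < length w \<longrightarrow> (\<exists>j. i \<le> j \<and> j \<le> i + 2 \<and> w!j = c))"

lemma ef_equiv_nbhd_agree: "ef_equiv k u p v p' \<Longrightarrow> nbhd_agree u p v p'"
  by (cases k) (simp_all add: ef_equiv.simps(2))

lemma nbhd_agree_sym: "nbhd_agree u p v p' \<Longrightarrow> nbhd_agree v p' u p"
  unfolding nbhd_agree_def by auto

lemma nbhd_agree_length: "nbhd_agree u p v p' \<Longrightarrow> p < length u \<longleftrightarrow> p' < length v"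
  unfolding nbhd_agree_def by (metis add_0_right le0)

lemma ef_equiv_sym: "ef_equiv k u p v p' \<Longrightarrow> ef_equiv k v p' u p"
proof (induction k arbitrary: p p')
  case 0
  then show ?case by (simp add: nbhd_agree_sym)
next
  case (Suc k)
  have l: "nbhd_agree u p v p'"
    and near_right: "\<forall>d\<le>3. p + d < length u \<longrightarrow> ef_equiv k u (p+d) v (p'+d)"
    and near_left: "\<forall>d\<le>3. d \<le> p \<longrightarrow> ef_equiv k u (p-d) v (p'-d)"
    and far_left: "\<forall>q<length u. q + 3 < p \<longrightarrow> (\<exists>q'<length v. q' + 3 < p' \<and> ef_equiv k u q v q')"
      "\<forall>q'<length v. q' + 3 < p' \<longrightarrow> (\<exists>q<length u. q + 3 < p \<and> ef_equiv k u q v q')"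
    and far_right: "\<forall>q<length u. p + 3 < q \<longrightarrow> (\<exists>q'<length v. p' + 3 < q' \<and> ef_equiv k u q v q')"
      "\<forall>q'<length v. p' + 3 < q' \<longrightarrow> (\<exists>q<length u. p + 3 < q \<and> ef_equiv k u q v q')"
    using Suc.prems unfolding ef_equiv.simps(2) by blast+
  have len: "\<forall>d\<le>3. p + d < length u \<longleftrightarrow> p' + d < length v" "\<forall>d\<le>3. d \<le> p \<longleftrightarrow> d \<le> p'"
    using l unfolding nbhd_agree_def by auto
  show ?case unfolding ef_equiv.simps(2)
  proof (intro conjI allI impI)
    show "nbhd_agree v p' u p" using l by (rule nbhd_agree_sym)
  next
    fix d :: nat assume "d \<le> 3" "p' + d < length v"
    then show "ef_equiv k v (p'+d) u (p+d)" using len(1) near_right Suc.IH by blast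
  next
    fix d :: nat assume "d \<le> 3" "d \<le> p'"
    then show "ef_equiv k v (p'-d) u (p-d)" using len(2) near_left Suc.IH by blast
  next
    fix q assume "q < length v" "q + 3 < p'"
    then show "\<exists>q'<length u. q' + 3 < p \<and> ef_equiv k v q u q'" using far_left(2) Suc.IH by blast
  next
    fix q assume "q < length u" "q + 3 < p"
    then show "\<exists>q'<length v. q' + 3 < p' \<and> ef_equiv k v q' u q" using far_left(1) Suc.IH by blast
  next
    fix q assume "q < length v" "p' + 3 < q"
    then show "\<exists>q'<length u. p + 3 < q' \<and> ef_equiv k v q u q'" using far_right(2) Suc.IH by blast
  next
    fix q assume "q < length u" "p + 3 < q"
    then show "\<exists>q'<length v. p' + 3 < q' \<and> ef_equiv k v q' u q" using far_right(1) Suc.IH by blast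
  qed
qed

lemma ef_equiv_Suc_imp: "ef_equiv (Suc k) u p v p' \<Longrightarrow> p < length u \<Longrightarrow> ef_equiv k u p v p'"
  unfolding ef_equiv.simps(2) by (auto dest: spec[of _ 0])

lemma same_order3_swap: "same_order3 a b a' b' \<Longrightarrow> same_order3 b a b' a'"
  unfolding same_order3_def by (auto simp: not_less)

lemma same_order3_sym: "same_order3 a b a' b' \<Longrightarrow> same_order3 a' b' a b"
  unfolding same_order3_def by auto

lemma same_order3_refl: "same_order3 a a a' a'"
  unfolding same_order3_def by auto

lemma same_order3_apart: "a + 3 < b \<Longrightarrow> a' + 3 < b' \<Longrightarrow> same_order3 a b a' b'"
  unfolding same_order3_def by auto

lemma same_order3_far:
  assumes "same_order3 p q p' q'" "p + 3 < q"
  shows "p' + 3 < q'"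
proof (rule ccontr)
  assume "\<not> p' + 3 < q'"
  moreover have "p' < q'" using assms unfolding same_order3_def by auto
  ultimately have "q' = p' + (q' - p')" "q' - p' \<le> 3" by auto
  then have "q = p + (q' - p')" using assms(1) unfolding same_order3_def by blast
  then show False using assms(2) \<open>q' - p' \<le> 3\<close> by linarith
qed

lemma dense_letters_between:
  assumes "dense_letters w" "p + 3 < q" "q \<le> length w"
  shows "\<exists>z. p < z \<and> z < q \<and> z < length w \<and> w!z = c"
proof -
  have "p + 1 + 2 < length w" using assms by linarith
  then obtain j where "p+1 \<le> j" "j \<le> p+1+2" "w!j = c"
    using assms(1) unfolding dense_letters_def by blast
  then show ?thesis using assms by (intro exI[of _ j]) auto
qed

lemma ex_between_shift:
  "(\<exists>z. (p::nat) < z \<and> z < p + d \<and> P z) \<longleftrightarrow> (\<exists>j. 0 < j \<and> j < d \<and> P (p + j))"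
  by (metis add_diff_inverse_nat add_less_cancel_left less_add_same_cancel1 not_less_iff_gr_or_eq)

lemma between_letter_iff:
  assumes l: "nbhd_agree u p v p'" and r: "same_order3 p q p' q'"
    and dense: "dense_letters u" "dense_letters v" and q: "q < length u" "q' < length v"
  shows "(\<exists>z. p < z \<and> z < q \<and> z < length u \<and> u!z = c) \<longleftrightarrow>
         (\<exists>z. p' < z \<and> z < q' \<and> z < length v \<and> v!z = c)"
proof -
  consider "q \<le> p" | "p + 3 < q" | d where "q = p + d" "0 < d" "d \<le> 3"
    by (cases "q \<le> p \<or> p + 3 < q") (auto intro: that(3)[of "q - p"])
  then show ?thesis
  proof cases
    case 1
    then have "q' \<le> p'" using r unfolding same_order3_def by auto
    with 1 show ?thesis by auto
  next
    case 2
    then show ?thesis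
      using dense_letters_between[OF dense(1) 2] dense_letters_between[OF dense(2)]
        same_order3_far[OF r 2] q by auto
  next
    case (3 d)
    then have q': "q' = p' + d" using r unfolding same_order3_def by auto
    have agree: "(p+j < length u \<longleftrightarrow> p'+j < length v) \<and> (p+j < length u \<longrightarrow> u!(p+j) = v!(p'+j))"
      if "j < d" for j
      using l that 3 unfolding nbhd_agree_def by auto
    have "(\<exists>z. p < z \<and> z < q \<and> z < length u \<and> u!z = c) \<longleftrightarrow>
          (\<exists>j. 0 < j \<and> j < d \<and> p+j < length u \<and> u!(p+j) = c)"
      using 3 ex_between_shift[of p d "\<lambda>z. z < length u \<and> u!z = c"] by simp
    also have "\<dots> \<longleftrightarrow> (\<exists>j. 0 < j \<and> j < d \<and> p'+j < length v \<and> v!(p'+j) = c)"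
      using agree by metis
    also have "\<dots> \<longleftrightarrow> (\<exists>z. p' < z \<and> z < q' \<and> z < length v \<and> v!z = c)"
      using q' ex_between_shift[of p' d "\<lambda>z. z < length v \<and> v!z = c"] by simp
    finally show ?thesis .
  qed
qed

lemma ef_equiv_Suc_forth:
  assumes e: "ef_equiv (Suc k) u p v p'" and p: "p < length u" and i: "i < length u"
  shows "\<exists>i'<length v. ef_equiv k u i v i' \<and> same_order3 i p i' p'"
proof -
  have l: "nbhd_agree u p v p'"
    and near_right: "\<And>d. d \<le> 3 \<Longrightarrow> p + d < length u \<Longrightarrow> ef_equiv k u (p+d) v (p'+d)"
    and near_left: "\<And>d. d \<le> 3 \<Longrightarrow> d \<le> p \<Longrightarrow> ef_equiv k u (p-d) v (p'-d)"
    and far_left: "\<And>q. q < length u \<Longrightarrow> q + 3 < p \<Longrightarrow> \<exists>q'<length v. q' + 3 < p' \<and> ef_equiv k u q v q'"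
    and far_right: "\<And>q. q < length u \<Longrightarrow> p + 3 < q \<Longrightarrow> \<exists>q'<length v. p' + 3 < q' \<and> ef_equiv k u q v q'"
    using e unfolding ef_equiv.simps(2) by blast+
  consider d where "i = p + d" "d \<le> 3" | d where "i = p - d" "d \<le> 3" "d \<le> p" | "i + 3 < p" | "p + 3 < i"
  proof -
    consider "p \<le> i" "i \<le> p + 3" | "i < p" "p \<le> i + 3" | "i + 3 < p" | "p + 3 < i" by linarith
    then show thesis using that(1)[of "i - p"] that(2)[of "p - i"] that(3,4) by cases auto
  qed
  then show ?thesis
  proof cases
    case (1 d)
    then have "p' + d < length v" using l i unfolding nbhd_agree_def by auto
    moreover have "same_order3 i p (p'+d) p'" using 1 unfolding same_order3_def by auto
    ultimately show ?thesis using near_right 1 i by blast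
  next
    case (2 d)
    then have "d \<le> p'" using l unfolding nbhd_agree_def by auto
    moreover have "p' < length v" using l p nbhd_agree_length by blast
    moreover have "same_order3 i p (p'-d) p'" using 2 \<open>d \<le> p'\<close> unfolding same_order3_def by auto
    ultimately show ?thesis using near_left 2 by (intro exI[of _ "p'-d"]) auto
  next
    case 3
    then obtain i' where "i' < length v" "i' + 3 < p'" "ef_equiv k u i v i'"
      using far_left[OF i] by blast
    then show ?thesis using same_order3_apart[OF 3] by blast
  next
    case 4
    then obtain i' where "i' < length v" "p' + 3 < i'" "ef_equiv k u i v i'"
      using far_right[OF i] by blast
    then show ?thesis using same_order3_swap[OF same_order3_apart[OF 4]] by blast
  qed
qed

lemma ef_equiv_Suc_back:
  assumes e: "ef_equiv (Suc k) u p v p'" and p: "p < length u" and i': "i' < length v"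
  shows "\<exists>i<length u. ef_equiv k u i v i' \<and> same_order3 i p i' p'"
proof -
  have "p' < length v" using p nbhd_agree_length ef_equiv_nbhd_agree[OF e] by blast
  then obtain i where "i < length u" "ef_equiv k v i' u i" "same_order3 i' p' i p"
    using ef_equiv_Suc_forth[OF ef_equiv_sym[OF e] _ i'] by blast
  then show ?thesis using ef_equiv_sym same_order3_sym by blast
qed

definition pebbles_equiv :: "nat \<Rightarrow> word \<Rightarrow> (var2 \<Rightarrow> nat) \<Rightarrow> word \<Rightarrow> (var2 \<Rightarrow> nat) \<Rightarrow> bool" where
  "pebbles_equiv k u s v s' \<longleftrightarrow>
     (\<forall>x. s x < length u \<and> s' x < length v \<and> ef_equiv k u (s x) v (s' x))
     \<and> (\<forall>x y. same_order3 (s x) (s y) (s' x) (s' y))"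

definition other_var :: "var2 \<Rightarrow> var2" where
  "other_var x = (if x = X then Y else X)"

lemma var2_other_cases: "z = x \<or> z = other_var x"
  unfolding other_var_def by (cases z; cases x) auto

lemma other_var_neq: "other_var x \<noteq> x"
  unfolding other_var_def by (cases x) auto

lemma pebbles_equiv_move:
  assumes P: "pebbles_equiv (Suc k) u s v s'" and i: "i < length u" "i' < length v"
    and e: "ef_equiv k u i v i'" and r: "same_order3 i (s (other_var x)) i' (s' (other_var x))"
  shows "pebbles_equiv k u (s(x:=i)) v (s'(x:=i'))"
proof -
  let ?y = "other_var x"
  have y: "ef_equiv k u (s ?y) v (s' ?y)" "s ?y < length u" "s' ?y < length v"
    using P ef_equiv_Suc_imp unfolding pebbles_equiv_def by blast+
  have "same_order3 ((s(x:=i)) z) ((s(x:=i)) z') ((s'(x:=i')) z) ((s'(x:=i')) z')" for z z'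
    using var2_other_cases[of z x] var2_other_cases[of z' x]
    by (elim disjE) (simp_all add: other_var_neq r same_order3_refl same_order3_swap[OF r])
  moreover have "(s(x:=i)) z < length u \<and> (s'(x:=i')) z < length v
      \<and> ef_equiv k u ((s(x:=i)) z) v ((s'(x:=i')) z)" for z
    using var2_other_cases[of z x] by (elim disjE) (simp_all add: other_var_neq y i e)
  ultimately show ?thesis unfolding pebbles_equiv_def by blast
qed

lemma ef_equiv_fo2_sat:
  assumes "qdepth \<phi> \<le> k" "dense_letters u" "dense_letters v" "pebbles_equiv k u s v s'"
  shows "fo2_sat u s \<phi> = fo2_sat v s' \<phi>"
  using assms
proof (induction \<phi> arbitrary: k s s')
  case (F2Lt x y)
  then show ?case unfolding pebbles_equiv_def same_order3_def by simp
next
  case (F2Eq x y)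
  then have "s y = s x + 0 \<longleftrightarrow> s' y = s' x + 0"
    unfolding pebbles_equiv_def same_order3_def by blast
  then show ?case by auto
next
  case (F2Let c x)
  then have "nbhd_agree u (s x) v (s' x)" "s x < length u" "s' x < length v"
    using ef_equiv_nbhd_agree unfolding pebbles_equiv_def by blast+
  then show ?case unfolding nbhd_agree_def by (auto dest: spec[of _ 0])
next
  case (F2Between c x y)
  then have "nbhd_agree u (s x) v (s' x)" "same_order3 (s x) (s y) (s' x) (s' y)"
    "s y < length u" "s' y < length v"
    using ef_equiv_nbhd_agree unfolding pebbles_equiv_def by blast+
  then show ?case using between_letter_iff F2Between.prems(2,3) by simp
next
  case (F2Not \<phi>)
  then show ?case by simp
next
  case (F2And \<phi>1 \<phi>2)
  then show ?case using F2And.IH(1)[of k s s'] F2And.IH(2)[of k s s'] by simp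
next
  case (F2Ex x \<phi>)
  then obtain k' where k: "k = Suc k'" "qdepth \<phi> \<le> k'" by (cases k) auto
  let ?y = "other_var x"
  have ey: "ef_equiv (Suc k') u (s ?y) v (s' ?y)" and sy: "s ?y < length u"
    using F2Ex.prems(4) k(1) unfolding pebbles_equiv_def by blast+
  note IH = F2Ex.IH[OF k(2) F2Ex.prems(2,3)]
  note move = pebbles_equiv_move[OF F2Ex.prems(4)[unfolded k(1)]]
  show ?case
  proof
    assume "fo2_sat u s (F2Ex x \<phi>)"
    then obtain i where i: "i < length u" "fo2_sat u (s(x:=i)) \<phi>" by auto
    obtain i' where i': "i' < length v" "ef_equiv k' u i v i'" "same_order3 i (s ?y) i' (s' ?y)"
      using ef_equiv_Suc_forth[OF ey sy i(1)] by blast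
    then have "fo2_sat v (s'(x:=i')) \<phi>" using IH[OF move[OF i(1) i'(1-3)]] i(2) by blast
    then show "fo2_sat v s' (F2Ex x \<phi>)" using i'(1) by auto
  next
    assume "fo2_sat v s' (F2Ex x \<phi>)"
    then obtain i' where i': "i' < length v" "fo2_sat v (s'(x:=i')) \<phi>" by auto
    obtain i where i: "i < length u" "ef_equiv k' u i v i'" "same_order3 i (s ?y) i' (s' ?y)"
      using ef_equiv_Suc_back[OF ey sy i'(1)] by blast
    then have "fo2_sat u (s(x:=i)) \<phi>" using IH[OF move[OF i(1) i'(1) i(2,3)]] i'(2) by blast
    then show "fo2_sat u s (F2Ex x \<phi>)" using i(1) by auto
  qed
qed

lemma ef_equiv_fo2_sentence:
  assumes "qdepth \<phi> \<le> k" "dense_letters u" "dense_letters v" "u \<noteq> []" "v \<noteq> []"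
    and "ef_equiv k u 0 v 0"
  shows "fo2_sat u (\<lambda>_. 0) \<phi> = fo2_sat v (\<lambda>_. 0) \<phi>"
  using assms ef_equiv_fo2_sat[of \<phi> k u v "\<lambda>_. 0" "\<lambda>_. 0"] same_order3_refl
  unfolding pebbles_equiv_def by auto

section \<open>A duplicator strategy for padded words\<close>

text \<open>Subtraction truncates at 0, so window_eq r w1 p w2 p' is only meaningful for r \<le> p, p'.\<close>

definition window_eq :: "nat \<Rightarrow> word \<Rightarrow> nat \<Rightarrow> word \<Rightarrow> nat \<Rightarrow> bool" where
  "window_eq r w1 p w2 p' \<longleftrightarrow> (\<forall>d\<le>r. w1!(p+d) = w2!(p'+d) \<and> w1!(p-d) = w2!(p'-d))"

lemma window_eqD:
  "window_eq r w1 p w2 p' \<Longrightarrow> d \<le> r \<Longrightarrow> w1!(p+d) = w2!(p'+d) \<and> w1!(p-d) = w2!(p'-d)"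
  unfolding window_eq_def by blast

lemma window_eq_shift_right:
  assumes w: "window_eq r w1 p w2 p'" and rd: "r' + d \<le> r"
  shows "window_eq r' w1 (p+d) w2 (p'+d)"
  unfolding window_eq_def
proof (intro allI impI conjI)
  fix d2 assume d2: "d2 \<le> r'"
  have "w1!(p+(d+d2)) = w2!(p'+(d+d2))" using window_eqD[OF w, of "d+d2"] d2 rd by linarith
  then show "w1!(p+d+d2) = w2!(p'+d+d2)" by (simp add: add.assoc)
  show "w1!(p+d-d2) = w2!(p'+d-d2)"
  proof (cases "d2 \<le> d")
    case True
    have "w1!(p+(d-d2)) = w2!(p'+(d-d2))" using window_eqD[OF w, of "d-d2"] d2 rd by linarith
    then show ?thesis using True by simp
  next
    case False
    have "w1!(p-(d2-d)) = w2!(p'-(d2-d))" using window_eqD[OF w, of "d2-d"] d2 rd by linarith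
    moreover have "p+d-d2 = p-(d2-d)" "p'+d-d2 = p'-(d2-d)" using False by auto
    ultimately show ?thesis by (simp only:)
  qed
qed

lemma window_eq_shift_left:
  assumes w: "window_eq r w1 p w2 p'" and rd: "r' + d \<le> r" and dp: "d \<le> p" "d \<le> p'"
  shows "window_eq r' w1 (p-d) w2 (p'-d)"
  unfolding window_eq_def
proof (intro allI impI conjI)
  fix d2 assume d2: "d2 \<le> r'"
  have "w1!(p-(d+d2)) = w2!(p'-(d+d2))" using window_eqD[OF w, of "d+d2"] d2 rd by linarith
  then show "w1!(p-d-d2) = w2!(p'-d-d2)" by (simp add: diff_diff_add)
  show "w1!(p-d+d2) = w2!(p'-d+d2)"
  proof (cases "d \<le> d2")
    case True
    have "w1!(p+(d2-d)) = w2!(p'+(d2-d))" using window_eqD[OF w, of "d2-d"] d2 rd by linarith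
    moreover have "p-d+d2 = p+(d2-d)" "p'-d+d2 = p'+(d2-d)" using True dp by auto
    ultimately show ?thesis by (simp only:)
  next
    case False
    have "w1!(p-(d-d2)) = w2!(p'-(d-d2))" using window_eqD[OF w, of "d-d2"] d2 rd by linarith
    moreover have "p-d+d2 = p-(d-d2)" "p'-d+d2 = p'-(d-d2)" using False dp by auto
    ultimately show ?thesis by (simp only:)
  qed
qed

lemma window_eq_trans: "window_eq r a p b q \<Longrightarrow> window_eq r b q c s \<Longrightarrow> window_eq r a p c s"
  unfolding window_eq_def by auto

lemma window_eq_sym: "window_eq r a p b q \<Longrightarrow> window_eq r b q a p"
  unfolding window_eq_def by auto

lemma window_eq_nbhd_agree:
  assumes "window_eq r u p v p'" "3 \<le> r" "r \<le> p" "r \<le> p'" "p + r < length u" "p' + r < length v"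
  shows "nbhd_agree u p v p'"
  unfolding nbhd_agree_def
proof (intro allI impI conjI)
  fix d :: nat assume d: "d \<le> 3"
  show "p + d < length u \<longleftrightarrow> p' + d < length v" using assms d by linarith
  show "u!(p+d) = v!(p'+d)" using window_eqD[OF assms(1), of d] d assms(2) by linarith
  show "d \<le> p \<longleftrightarrow> d \<le> p'" using assms d by linarith
  show "u!(p-d) = v!(p'-d)" using window_eqD[OF assms(1), of d] d assms(2) by linarith
qed

text \<open>The word v is u with e letters inserted in the middle: they agree on a prefix of
  length C, and on a suffix of length C up to the shift by e. The sizes are chosen for a game of
  K rounds.\<close>

locale padded_pair =
  fixes u v :: word and e C Q K :: nat
  assumes lenv: "length v = length u + e"
  and pre: "\<And>i. i<C \<Longrightarrow> u!i = v!i"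
  and suf: "\<And>i. length u \<le> i + C \<Longrightarrow> i < length u \<Longrightarrow> u!i = v!(i+e)"
  and szC: "Suc K * Q + 3*K + 10 \<le> C"
  and szL: "2*C \<le> length u"
  and szQ: "3*K + 8 \<le> Q"
begin

definition width :: "nat \<Rightarrow> nat" where "width k = Suc k * Q"
definition radius :: "nat \<Rightarrow> nat" where "radius k = 3*k+3"

text \<open>The duplicator's invariant with k rounds left: positions within width k of either end
  are answered by the same position counted from that end, positions in the middle by a
  position whose window of radius (radius k) looks the same.\<close>

definition matched :: "nat \<Rightarrow> nat \<Rightarrow> nat \<Rightarrow> bool" where
  "matched k p p' \<longleftrightarrow> (p < width k \<and> p' = p) \<or> (length u \<le> p + width k \<and> p' = p + e)
     \<or> (width k \<le> p \<and> p + width k < length u \<and> width k \<le> p' \<and> p' + width k < length v \<and> window_eq (radius k) u p v p')"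

lemma width_Suc: "width (Suc k) = width k + Q" unfolding width_def by simp
lemma Q_le_width: "Q \<le> width k" unfolding width_def by simp
lemma radius_le_Q: "k \<le> K \<Longrightarrow> radius k + 5 \<le> Q" using szQ unfolding radius_def by simp

lemma width_radius_le: "k \<le> K \<Longrightarrow> width k + radius k + 7 \<le> C"
proof -
  assume "k \<le> K"
  then have "width k \<le> Suc K * Q" "radius k \<le> 3*K+3" unfolding width_def radius_def by simp_all
  then show ?thesis using szC by linarith
qed

lemma prefix_window_eq: "q + r < C \<Longrightarrow> window_eq r u q v q"
  unfolding window_eq_def using pre by auto

lemma suffix_window_eq:
  assumes "length u + r \<le> q + C" "q + r < length u" "r \<le> q"
  shows "window_eq r u q v (q+e)"
  unfolding window_eq_def
proof (intro allI impI conjI)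
  fix d assume "d \<le> r"
  then show "u!(q+d) = v!(q+e+d)"
    using suf[of "q+d"] assms by (simp add: add.commute add.left_commute)
  have "u!(q-d) = v!(q-d+e)" using suf[of "q-d"] assms \<open>d\<le>r\<close> by simp
  then show "u!(q-d) = v!(q+e-d)" using \<open>d\<le>r\<close> assms by simp
qed

lemma prefix_nbhd_agree:
  assumes "p + 3 < C"
  shows "nbhd_agree u p v p"
  unfolding nbhd_agree_def
proof (intro allI impI conjI)
  fix d :: nat assume d: "d \<le> 3"
  show "p + d < length u \<longleftrightarrow> p + d < length v" using assms d szL lenv by linarith
  show "u!(p+d) = v!(p+d)" using assms d pre[of "p+d"] by simp
  show "u!(p-d) = v!(p-d)" using assms d pre[of "p-d"] by simp
qed simp

lemma suffix_nbhd_agree: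
  assumes "length u + 3 \<le> p + C" "p < length u"
  shows "nbhd_agree u p v (p + e)"
  unfolding nbhd_agree_def
proof (intro allI impI conjI)
  fix d :: nat assume d: "d \<le> 3"
  have "3 \<le> p" using assms szL by linarith
  show "p + d < length u \<longleftrightarrow> p + e + d < length v" using lenv by linarith
  show "u!(p+d) = v!(p+e+d)" if "p + d < length u"
    using suf[of "p+d"] assms d that by (simp add: ac_simps)
  show "d \<le> p \<longleftrightarrow> d \<le> p + e" using \<open>3 \<le> p\<close> d by linarith
  have "p + e - d = p - d + e" using \<open>3 \<le> p\<close> d by simp
  then show "u!(p-d) = v!(p+e-d)" using suf[of "p-d"] assms d by simp
qed

lemma matched_nbhd_agree:
  assumes "k \<le> K" "matched k p p'" "p < length u" "p' < length v"
  shows "nbhd_agree u p v p'"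
proof -
  have sizes: "width k + radius k + 7 \<le> C" "radius k + 5 \<le> Q" "Q \<le> width k" "3 \<le> radius k"
    using width_radius_le radius_le_Q Q_le_width assms(1) unfolding radius_def by simp_all
  from assms(2) show ?thesis
    unfolding matched_def
  proof (elim disjE conjE)
    assume "p < width k" "p' = p"
    then show ?thesis using prefix_nbhd_agree[of p] sizes by simp
  next
    assume "length u \<le> p + width k" "p' = p + e"
    then show ?thesis using suffix_nbhd_agree[of p] sizes assms(3) by simp
  next
    assume "width k \<le> p" "p + width k < length u" "width k \<le> p'" "p' + width k < length v"
      "window_eq (radius k) u p v p'"
    then show ?thesis using window_eq_nbhd_agree[of "radius k" u p v p'] sizes by simp
  qed
qed

end

text \<open>A move far from the pebble is answered in the layer between width k and width (Suc k)
  from the appropriate end of u, so every window of radius (radius k) must occur there.\<close>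

locale covered_padded_pair = padded_pair +
  assumes cover_prefix_u: "\<And>k q. k < K \<Longrightarrow> width k \<le> q \<Longrightarrow> q + width k < length u \<Longrightarrow>
      \<exists>r. width k \<le> r \<and> r + 4 \<le> width (Suc k) \<and> window_eq (radius k) u q u r"
  and cover_prefix_v: "\<And>k q. k < K \<Longrightarrow> width k \<le> q \<Longrightarrow> q + width k < length v \<Longrightarrow>
      \<exists>r. width k \<le> r \<and> r + 4 \<le> width (Suc k) \<and> window_eq (radius k) v q u r"
  and cover_suffix_u: "\<And>k q. k < K \<Longrightarrow> width k \<le> q \<Longrightarrow> q + width k < length u \<Longrightarrow>
      \<exists>r. length u + 4 \<le> r + width (Suc k) \<and> r + width k < length u \<and> window_eq (radius k) u q u r"
  and cover_suffix_v: "\<And>k q. k < K \<Longrightarrow> width k \<le> q \<Longrightarrow> q + width k < length v \<Longrightarrow>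
      \<exists>r. length u + 4 \<le> r + width (Suc k) \<and> r + width k < length u \<and> window_eq (radius k) v q u r"
begin

lemma size_facts:
  assumes "k < K"
  shows "width (Suc k) = width k + Q" "width (Suc k) + radius (Suc k) + 7 \<le> C" "radius (Suc k) = radius k + 3"
    "2*C \<le> length u" "radius (Suc k) + 5 \<le> Q" "length v = length u + e" "Q \<le> width k" "3 \<le> radius k"
  using width_Suc width_radius_le[of "Suc k"] assms szL radius_le_Q[of "Suc k"] lenv Q_le_width
  unfolding radius_def by auto

lemma matched_cases:
  assumes "matched k p p'"
  obtains (head) "p < width k" "p' = p" | (tail) "length u \<le> p + width k" "p' = p + e"
    | (middle) "width k \<le> p" "p + width k < length u" "width k \<le> p'" "p' + width k < length v" "window_eq (radius k) u p v p'"
  using assms unfolding matched_def by blast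

lemma matched_prefix:
  assumes "k < K" "q < width (Suc k) + 3"
  shows "matched k q q"
proof -
  note n = size_facts[OF assms(1)]
  show ?thesis
  proof (cases "q < width k")
    case True then show ?thesis unfolding matched_def by simp
  next
    case False
    have "window_eq (radius k) u q v q" using prefix_window_eq[of q "radius k"] n assms by simp
    then show ?thesis unfolding matched_def using False n assms by simp
  qed
qed

lemma matched_suffix:
  assumes "k < K" "length u \<le> q + width (Suc k) + 3" "q < length u"
  shows "matched k q (q+e)"
proof -
  note n = size_facts[OF assms(1)]
  show ?thesis
  proof (cases "length u \<le> q + width k")
    case True then show ?thesis unfolding matched_def by simp
  next
    case False
    have "window_eq (radius k) u q v (q+e)"
      using suffix_window_eq[of "radius k" q] n assms False by simp
    then show ?thesis unfolding matched_def using False n assms by simp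
  qed
qed

context
  fixes k p p'
  assumes kK: "k < K" and S: "matched (Suc k) p p'" and pu: "p < length u" and pv: "p' < length v"
begin

lemma matched_near_right:
  assumes d: "d \<le> 3" "p + d < length u"
  shows "p' + d < length v \<and> matched k (p+d) (p'+d)"
proof -
  note n = size_facts[OF kK]
  from S show ?thesis
  proof (cases rule: matched_cases)
    case head
    then show ?thesis using matched_prefix[OF kK, of "p+d"] d n by simp
  next
    case tail
    have "length u \<le> p + d + width (Suc k) + 3" using tail n by simp
    then have "matched k (p+d) (p+d+e)" using matched_suffix[OF kK, of "p+d"] d by simp
    moreover have "p' + d = p + d + e" using tail by simp
    ultimately have "matched k (p+d) (p'+d)" by (simp add: ac_simps)
    moreover have "p' + d < length v" using tail d n by simp
    ultimately show ?thesis by blast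
  next
    case middle
    have "window_eq (radius k) u (p+d) v (p'+d)"
      using window_eq_shift_right[OF middle(5), of "radius k" d] n d by simp
    then show ?thesis unfolding matched_def using middle n d by simp
  qed
qed

lemma matched_near_left:
  assumes d: "d \<le> 3" "d \<le> p"
  shows "d \<le> p' \<and> matched k (p-d) (p'-d)"
proof -
  note n = size_facts[OF kK]
  from S show ?thesis
  proof (cases rule: matched_cases)
    case head
    then show ?thesis using matched_prefix[OF kK, of "p-d"] d n by simp
  next
    case tail
    have "p - d + e = p' - d" using tail d by simp
    moreover have "length u \<le> p - d + width (Suc k) + 3" using tail n d by simp
    then have "matched k (p-d) (p-d+e)" using matched_suffix[OF kK, of "p-d"] pu by simp
    ultimately show ?thesis using d tail by simp
  next
    case middle
    have "window_eq (radius k) u (p-d) v (p'-d)"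
      using window_eq_shift_left[OF middle(5), of "radius k" d] n d middle by simp
    moreover have "width k \<le> p - d" "p - d + width k < length u" "width k \<le> p' - d" "p' - d + width k < length v" "d \<le> p'"
      using middle n d by auto
    ultimately show ?thesis unfolding matched_def by blast
  qed
qed

lemma matched_far_left_forth:
  assumes q: "q < length u" "q + 3 < p"
  shows "\<exists>q'<length v. q' + 3 < p' \<and> matched k q q'"
proof -
  note n = size_facts[OF kK]
  show ?thesis
  proof (cases "p < width (Suc k) \<and> p' = p")
    case True
    then show ?thesis using matched_prefix[OF kK, of q] q n by (intro exI[of _ q]) simp
  next
    case False
    then have pb: "width (Suc k) \<le> p" "width (Suc k) \<le> p'"
      using S n pu unfolding matched_def by auto
    show ?thesis
    proof (cases "q < width k")
      case True
      then show ?thesis using pb n unfolding matched_def by (intro exI[of _ q]) simp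
    next
      case F1: False
      show ?thesis
      proof (cases "length u \<le> q + width k")
        case True
        then have "\<not> (width (Suc k) \<le> p \<and> p + width (Suc k) < length u)" using q n by simp
        then have "p' = p + e" using S False unfolding matched_def by auto
        then show ?thesis using True q n unfolding matched_def by (intro exI[of _ "q+e"]) simp
      next
        case False
        obtain r where r: "width k \<le> r" "r + 4 \<le> width (Suc k)" "window_eq (radius k) u q u r"
          using cover_prefix_u[OF kK, of q] F1 False q by auto
        have "window_eq (radius k) u q v r"
          using window_eq_trans[OF r(3) prefix_window_eq[of r "radius k"]] r n by simp
        then show ?thesis using r F1 False q n pb unfolding matched_def by (intro exI[of _ r]) simp
      qed
    qed
  qed
qed

lemma matched_far_left_back:
  assumes q: "q' < length v" "q' + 3 < p'"
  shows "\<exists>q<length u. q + 3 < p \<and> matched k q q'"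
proof -
  note n = size_facts[OF kK]
  show ?thesis
  proof (cases "p < width (Suc k) \<and> p' = p")
    case True
    then show ?thesis using matched_prefix[OF kK, of q'] q n by (intro exI[of _ q']) simp
  next
    case False
    then have pb: "width (Suc k) \<le> p" "width (Suc k) \<le> p'"
      using S n pu unfolding matched_def by auto
    show ?thesis
    proof (cases "q' < width k")
      case True
      then show ?thesis using pb n unfolding matched_def by (intro exI[of _ q']) simp
    next
      case F1: False
      show ?thesis
      proof (cases "length v \<le> q' + width k")
        case True
        then have "\<not> (width (Suc k) \<le> p' \<and> p' + width (Suc k) < length v)" using q n by simp
        then have pe: "p' = p + e" using S False unfolding matched_def by auto
        have "q' - e + 3 < p" "q' = q' - e + e" using pe q True n by auto
        then show ?thesis using True q n unfolding matched_def by (intro exI[of _ "q'-e"]) auto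
      next
        case False
        obtain r where r: "width k \<le> r" "r + 4 \<le> width (Suc k)" "window_eq (radius k) v q' u r"
          using cover_prefix_v[OF kK, of q'] F1 False q by auto
        have "window_eq (radius k) u r v q'" using window_eq_sym[OF r(3)] .
        then show ?thesis using r F1 False q n pb unfolding matched_def by (intro exI[of _ r]) simp
      qed
    qed
  qed
qed

lemma matched_far_right_forth:
  assumes q: "q < length u" "p + 3 < q"
  shows "\<exists>q'<length v. p' + 3 < q' \<and> matched k q q'"
proof -
  note n = size_facts[OF kK]
  from S show ?thesis
  proof (cases rule: matched_cases)
    case tail
    then show ?thesis using matched_suffix[OF kK, of q] q n by (intro exI[of _ "q+e"]) simp
  next
    case head
    show ?thesis
    proof (cases "q < width k")
      case True then show ?thesis using head q n unfolding matched_def by (intro exI[of _ q]) simp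
    next
      case F1: False
      show ?thesis
      proof (cases "length u \<le> q + width k")
        case True then show ?thesis
          using head q n unfolding matched_def by (intro exI[of _ "q+e"]) simp
      next
        case False
        obtain r where r: "length u + 4 \<le> r + width (Suc k)" "r + width k < length u" "window_eq (radius k) u q u r"
          using cover_suffix_u[OF kK, of q] F1 False q by auto
        have "window_eq (radius k) u q v (r+e)"
          using window_eq_trans[OF r(3) suffix_window_eq[of "radius k" r]] r n by simp
        then show ?thesis
          using r F1 False q n head unfolding matched_def by (intro exI[of _ "r+e"]) simp
      qed
    qed
  next
    case middle
    show ?thesis
    proof (cases "length u \<le> q + width k")
      case True then show ?thesis
        using middle q n unfolding matched_def by (intro exI[of _ "q+e"]) simp
    next
      case False
      have F1: "width k \<le> q" using middle q n by simp
      obtain r where r: "length u + 4 \<le> r + width (Suc k)" "r + width k < length u" "window_eq (radius k) u q u r"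
        using cover_suffix_u[OF kK, of q] F1 False q by auto
      have "window_eq (radius k) u q v (r+e)"
        using window_eq_trans[OF r(3) suffix_window_eq[of "radius k" r]] r n by simp
      then show ?thesis
        using r F1 False q n middle unfolding matched_def by (intro exI[of _ "r+e"]) simp
    qed
  qed
qed

lemma matched_far_right_back:
  assumes q: "q' < length v" "p' + 3 < q'"
  shows "\<exists>q<length u. p + 3 < q \<and> matched k q q'"
proof -
  note n = size_facts[OF kK]
  from S show ?thesis
  proof (cases rule: matched_cases)
    case tail
    have "q' = q' - e + e" "p + 3 < q' - e" using tail q by auto
    then show ?thesis
      using matched_suffix[OF kK, of "q'-e"] q n tail by (intro exI[of _ "q'-e"]) simp
  next
    case head
    show ?thesis
    proof (cases "q' < width k")
      case True then show ?thesis using head q n unfolding matched_def by (intro exI[of _ q']) simp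
    next
      case F1: False
      show ?thesis
      proof (cases "length v \<le> q' + width k")
        case True
        have "q' = q' - e + e" "length u \<le> q' - e + width k" "p + 3 < q' - e" "q' - e < length u"
          using True n head q by auto
        then show ?thesis unfolding matched_def by (intro exI[of _ "q'-e"]) simp
      next
        case False
        obtain r where r: "length u + 4 \<le> r + width (Suc k)" "r + width k < length u" "window_eq (radius k) v q' u r"
          using cover_suffix_v[OF kK, of q'] F1 False q by auto
        have "window_eq (radius k) u r v q'" using window_eq_sym[OF r(3)] .
        then show ?thesis
          using r F1 False q n head unfolding matched_def by (intro exI[of _ r]) simp
      qed
    qed
  next
    case middle
    show ?thesis
    proof (cases "length v \<le> q' + width k")
      case True
      have "q' = q' - e + e" "length u \<le> q' - e + width k" "p + 3 < q' - e" "q' - e < length u"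
        using True n middle q by auto
      then show ?thesis unfolding matched_def by (intro exI[of _ "q'-e"]) simp
    next
      case False
      have F1: "width k \<le> q'" using middle q n by simp
      obtain r where r: "length u + 4 \<le> r + width (Suc k)" "r + width k < length u" "window_eq (radius k) v q' u r"
        using cover_suffix_v[OF kK, of q'] F1 False q by auto
      have "window_eq (radius k) u r v q'" using window_eq_sym[OF r(3)] .
      then show ?thesis
        using r F1 False q n middle unfolding matched_def by (intro exI[of _ r]) simp
    qed
  qed
qed

end

lemma matched_ef_equiv:
  "k \<le> K \<Longrightarrow> matched k p p' \<Longrightarrow> p < length u \<Longrightarrow> p' < length v \<Longrightarrow> ef_equiv k u p v p'"
proof (induction k arbitrary: p p')
  case 0
  then show ?case using matched_nbhd_agree[of 0 p p'] by simp
next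
  case (Suc k)
  have kK: "k < K" using Suc.prems by simp
  note a = kK Suc.prems(2,3,4)
  have IH: "\<And>q q'. matched k q q' \<Longrightarrow> q < length u \<Longrightarrow> q' < length v \<Longrightarrow> ef_equiv k u q v q'"
    using Suc.IH kK by simp
  show ?case unfolding ef_equiv.simps(2)
  proof (intro conjI allI impI)
    show "nbhd_agree u p v p'" using matched_nbhd_agree[OF Suc.prems] .
  next
    fix d :: nat assume "d \<le> 3" "p + d < length u"
    then show "ef_equiv k u (p+d) v (p'+d)" using matched_near_right[OF a, of d] IH by blast
  next
    fix d :: nat assume "d \<le> 3" "d \<le> p"
    moreover have "p - d < length u" using Suc.prems by simp
    moreover have "p' - d < length v" using Suc.prems by simp
    ultimately show "ef_equiv k u (p-d) v (p'-d)" using matched_near_left[OF a, of d] IH by blast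
  next
    fix q assume "q < length u" "q + 3 < p"
    then show "\<exists>q'<length v. q' + 3 < p' \<and> ef_equiv k u q v q'"
      using matched_far_left_forth[OF a, of q] IH by blast
  next
    fix q' assume "q' < length v" "q' + 3 < p'"
    then show "\<exists>q<length u. q + 3 < p \<and> ef_equiv k u q v q'"
      using matched_far_left_back[OF a, of q'] IH by blast
  next
    fix q assume "q < length u" "p + 3 < q"
    then show "\<exists>q'<length v. p' + 3 < q' \<and> ef_equiv k u q v q'"
      using matched_far_right_forth[OF a, of q] IH by blast
  next
    fix q' assume "q' < length v" "p' + 3 < q'"
    then show "\<exists>q<length u. p + 3 < q \<and> ef_equiv k u q v q'"
      using matched_far_right_back[OF a, of q'] IH by blast
  qed
qed

lemma ef_equiv_start: "ef_equiv K u 0 v 0"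
proof -
  have "0 < width K" unfolding width_def using szQ by simp
  moreover have "0 < length u" "0 < length v" using szL szC lenv by auto
  ultimately show ?thesis using matched_ef_equiv[of K 0 0] unfolding matched_def by simp
qed

end

section \<open>Tiled words\<close>

text \<open>Tile c of length h consists of a marker, A if \<sigma> c and B otherwise, followed by
  (AB)^((h-1)/2).\<close>

definition tiled :: "nat \<Rightarrow> (nat \<Rightarrow> bool) \<Rightarrow> nat \<Rightarrow> letter" where
  "tiled h \<sigma> i = (if i mod h = 0 then (if \<sigma> (i div h) then A else B) else if odd (i mod h) then A else B)"

definition tiled_word :: "nat \<Rightarrow> (nat \<Rightarrow> bool) \<Rightarrow> nat \<Rightarrow> word" where
  "tiled_word h \<sigma> n = map (tiled h \<sigma>) [0..<n]"

lemma length_tiled_word [simp]: "length (tiled_word h \<sigma> n) = n"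
  unfolding tiled_word_def by simp

lemma nth_tiled_word [simp]: "i < n \<Longrightarrow> tiled_word h \<sigma> n ! i = tiled h \<sigma> i"
  unfolding tiled_word_def by simp

lemma tiled_decomp:
  "t < h \<Longrightarrow> tiled h \<sigma> (c*h + t) =
     (if t = 0 then (if \<sigma> c then A else B) else if odd t then A else B)"
  unfolding tiled_def by simp

lemma tiled_offsets_eq:
  assumes h: "2*r < h" and t: "t < h" and c1: "t \<le> r \<Longrightarrow> \<sigma> c = \<sigma>' c'"
    and c2: "h \<le> t + r \<Longrightarrow> \<sigma> (Suc c) = \<sigma>' (Suc c')"
    and q: "r \<le> c*h + t" "r \<le> c'*h + t" and d: "d \<le> r"
  shows "tiled h \<sigma> (c*h+t+d) = tiled h \<sigma>' (c'*h+t+d) \<and> tiled h \<sigma> (c*h+t-d) = tiled h \<sigma>' (c'*h+t-d)"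
proof
  show "tiled h \<sigma> (c*h+t+d) = tiled h \<sigma>' (c'*h+t+d)"
  proof (cases "t + d < h")
    case True
    have e1: "tiled h \<sigma> (c*h+t+d) = (if t+d = 0 then (if \<sigma> c then A else B) else if odd (t+d) then A else B)"
      by (simp only: add.assoc tiled_decomp[OF True])
    have e2: "tiled h \<sigma>' (c'*h+t+d) = (if t+d = 0 then (if \<sigma>' c' then A else B) else if odd (t+d) then A else B)"
      by (simp only: add.assoc tiled_decomp[OF True])
    show ?thesis using e1 e2 c1 d by auto
  next
    case False
    have lt: "t + d - h < h" using h t d by linarith
    have eq1: "c*h+t+d = Suc c*h + (t+d-h)" "c'*h+t+d = Suc c'*h + (t+d-h)" using False by simp_all
    have e1: "tiled h \<sigma> (c*h+t+d) = (if t+d-h = 0 then (if \<sigma> (Suc c) then A else B) else if odd (t+d-h) then A else B)"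
      by (simp only: eq1 tiled_decomp[OF lt])
    have e2: "tiled h \<sigma>' (c'*h+t+d) = (if t+d-h = 0 then (if \<sigma>' (Suc c') then A else B) else if odd (t+d-h) then A else B)"
      by (simp only: eq1 tiled_decomp[OF lt])
    have "t + d - h = 0 \<Longrightarrow> h \<le> t + r" using False d by linarith
    then show ?thesis using e1 e2 c2 by auto
  qed
next
  show "tiled h \<sigma> (c*h+t-d) = tiled h \<sigma>' (c'*h+t-d)"
  proof (cases "d \<le> t")
    case True
    have lt: "t - d < h" using t by simp
    have eq1: "c*h+t-d = c*h + (t-d)" "c'*h+t-d = c'*h + (t-d)" using True by simp_all
    have e1: "tiled h \<sigma> (c*h+t-d) = (if t-d = 0 then (if \<sigma> c then A else B) else if odd (t-d) then A else B)"
      by (simp only: eq1 tiled_decomp[OF lt])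
    have e2: "tiled h \<sigma>' (c'*h+t-d) = (if t-d = 0 then (if \<sigma>' c' then A else B) else if odd (t-d) then A else B)"
      by (simp only: eq1 tiled_decomp[OF lt])
    have "t - d = 0 \<Longrightarrow> t \<le> r" using True d by linarith
    then show ?thesis using e1 e2 c1 by auto
  next
    case False
    have c0: "0 < c" using q(1) d False by (cases c) auto
    have c0': "0 < c'" using q(2) d False by (cases c') auto
    have lt: "h + t - d < h" using False h d by linarith
    have nz: "h + t - d \<noteq> 0" using h d by linarith
    have m1: "c*h = (c-1)*h + h" "c'*h = (c'-1)*h + h" using c0 c0'
      by (metis Suc_diff_1 add.commute mult_Suc)+
    have eq1: "c*h+t-d = (c-1)*h + (h+t-d)" "c'*h+t-d = (c'-1)*h + (h+t-d)"
      using m1 False h d by simp_all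
    have e1: "tiled h \<sigma> (c*h+t-d) = (if odd (h+t-d) then A else B)"
      using nz by (simp only: eq1 tiled_decomp[OF lt]) simp
    have e2: "tiled h \<sigma>' (c'*h+t-d) = (if odd (h+t-d) then A else B)"
      using nz by (simp only: eq1 tiled_decomp[OF lt]) simp
    show ?thesis using e1 e2 by simp
  qed
qed

lemma tiled_word_window_eq:
  assumes h: "2*r < h" and q: "q mod h = x mod h"
    and c1: "q mod h \<le> r \<Longrightarrow> \<sigma> (q div h) = \<sigma>' (x div h)"
    and c2: "h \<le> q mod h + r \<Longrightarrow> \<sigma> (Suc (q div h)) = \<sigma>' (Suc (x div h))"
    and r: "r \<le> q" "r \<le> x" "q + r < n1" "x + r < n2"
  shows "window_eq r (tiled_word h \<sigma> n1) q (tiled_word h \<sigma>' n2) x"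
  unfolding window_eq_def
proof (intro allI impI)
  fix d assume d: "d \<le> r"
  have h0: "0 < h" using h by simp
  have t: "q mod h < h" using h0 by simp
  have eqs: "(q div h)*h + q mod h = q" "(x div h)*h + q mod h = x"
    using q by (metis div_mult_mod_eq)+
  have r1: "r \<le> (q div h)*h + q mod h" "r \<le> (x div h)*h + q mod h" unfolding eqs using r by auto
  have W: "tiled h \<sigma> (q+d) = tiled h \<sigma>' (x+d) \<and> tiled h \<sigma> (q-d) = tiled h \<sigma>' (x-d)"
    using tiled_offsets_eq[OF h t c1 c2 r1 d] unfolding eqs .
  have "q + d < n1" "x + d < n2" "q - d < n1" "x - d < n2" using r d by auto
  then show "tiled_word h \<sigma> n1 ! (q+d) = tiled_word h \<sigma>' n2 ! (x+d) \<and>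
             tiled_word h \<sigma> n1 ! (q-d) = tiled_word h \<sigma>' n2 ! (x-d)"
    using W by simp
qed

lemma exists_tile_of_parity:
  fixes h t lo :: nat
  assumes "0 < h" "t < h"
  shows "\<exists>c. even c = b \<and> lo \<le> c*h+t \<and> c*h+t < lo + 3*h"
proof -
  define c0 where "c0 = lo div h + 1"
  define c where "c = (if even c0 = b then c0 else c0 + 1)"
  have "even c = b" unfolding c_def by auto
  have "lo < c0 * h"
  proof -
    have "lo = (lo div h)*h + lo mod h" by (metis div_mult_mod_eq)
    moreover have "lo mod h < h" using assms(1) by simp
    moreover have "c0 * h = (lo div h)*h + h" unfolding c0_def by (simp add: algebra_simps)
    ultimately show ?thesis by linarith
  qed
  moreover have "c0 \<le> c" "c \<le> c0 + 1" unfolding c_def by auto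
  ultimately have "lo \<le> c*h+t"
  proof -
    have "c0*h \<le> c*h" using \<open>c0 \<le> c\<close> by simp
    then show ?thesis using \<open>lo < c0*h\<close> by linarith
  qed
  moreover have "c*h + t < (c0+2)*h"
  proof -
    have "c*h \<le> (c0+1)*h" using \<open>c \<le> c0+1\<close> mult_le_mono1 by blast
    then show ?thesis using assms(2) by (simp add: algebra_simps)
  qed
  moreover have "(c0+2)*h \<le> lo + 3*h"
  proof -
    have "(lo div h)*h \<le> lo" by (simp add: div_times_less_eq_dividend)
    then show ?thesis unfolding c0_def by (simp add: algebra_simps)
  qed
  ultimately show ?thesis using \<open>even c = b\<close> by (intro exI[of _ c]) simp
qed

text \<open>A window of radius r < h/2 sees the offset inside a tile and at most one marker, so it
  reappears in the word with alternating markers within any three consecutive tiles.\<close>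

lemma tiled_cover:
  assumes h: "2*r < h" and r: "r \<le> q" "q + r < n1" "r \<le> lo" "lo + 3*h + r \<le> n2"
  shows "\<exists>x. lo \<le> x \<and> x < lo + 3*h \<and> window_eq r (tiled_word h \<sigma> n1) q (tiled_word h even n2) x"
proof -
  have h0: "0 < h" using h by simp
  define t where "t = q mod h"
  have t: "t < h" unfolding t_def using h0 by simp
  define b where "b = (if t \<le> r then \<sigma> (q div h) else \<not> \<sigma> (Suc (q div h)))"
  obtain c where c: "even c = b" "lo \<le> c*h+t" "c*h+t < lo + 3*h"
    using exists_tile_of_parity[OF h0 t] by blast
  define x where "x = c*h + t"
  have xd: "x div h = c" "x mod h = t" unfolding x_def using t by simp_all
  have "window_eq r (tiled_word h \<sigma> n1) q (tiled_word h even n2) x"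
  proof (rule tiled_word_window_eq[OF h])
    show "q mod h = x mod h" using xd t_def by simp
    show "q mod h \<le> r \<Longrightarrow> \<sigma> (q div h) = even (x div h)" using xd c b_def t_def by simp
    show "h \<le> q mod h + r \<Longrightarrow> \<sigma> (Suc (q div h)) = even (Suc (x div h))"
      using xd c b_def t_def h by auto
    show "r \<le> q" "q + r < n1" by fact+
    show "r \<le> x" "x + r < n2" using c r unfolding x_def by linarith+
  qed
  then show ?thesis using c unfolding x_def by blast
qed

lemma dense_letters_tiled:
  assumes h: "odd h" "3 \<le> h" shows "dense_letters (tiled_word h \<sigma> n)"
  unfolding dense_letters_def
proof (intro allI impI)
  fix i c assume i: "i + 2 < length (tiled_word h \<sigma> n)"
  then have i2: "i + 2 < n" by simp
  let ?w = "tiled_word h \<sigma> n"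
  have nth: "\<And>j. j \<le> i + 2 \<Longrightarrow> ?w!j = tiled h \<sigma> j" using i2 by simp
  define t where "t = i mod h"
  define q where "q = i div h"
  have h0: "0 < h" using h by simp
  have tl: "t < h" unfolding t_def using h0 by simp
  have iq: "i = q*h + t" unfolding q_def t_def by simp
  have hasA: "\<exists>j. i \<le> j \<and> j \<le> i+2 \<and> tiled h \<sigma> j = A" and hasB: "\<exists>j. i \<le> j \<and> j \<le> i+2 \<and> tiled h \<sigma> j = B"
  proof -
    consider "t = 0" | "t = h - 1" | "0 < t" "t + 1 < h" using tl by linarith
    then have "(\<exists>j. i \<le> j \<and> j \<le> i+2 \<and> tiled h \<sigma> j = A) \<and> (\<exists>j. i \<le> j \<and> j \<le> i+2 \<and> tiled h \<sigma> j = B)"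
    proof cases
      case 1
      have a: "tiled h \<sigma> (i+1) = A" using tiled_decomp[of 1 h \<sigma> q] h iq 1 by (simp add: add.commute)
      have b: "tiled h \<sigma> (i+2) = B" using tiled_decomp[of 2 h \<sigma> q] h iq 1 by (simp add: add.commute)
      show ?thesis
      proof (intro conjI)
        show "\<exists>j. i \<le> j \<and> j \<le> i+2 \<and> tiled h \<sigma> j = A" using a by (intro exI[of _ "i+1"]) simp
        show "\<exists>j. i \<le> j \<and> j \<le> i+2 \<and> tiled h \<sigma> j = B" using b by (intro exI[of _ "i+2"]) simp
      qed
    next
      case 2
      have ev: "even (h - 1)" using h by simp
      have a: "tiled h \<sigma> i = B" using tiled_decomp[of "h-1" h \<sigma> q] h iq 2 ev by simp
      have "i + 2 = Suc q * h + 1" using iq 2 h by simp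
      then have b: "tiled h \<sigma> (i+2) = A" using tiled_decomp[of 1 h \<sigma> "Suc q"] h by simp
      show ?thesis
      proof (intro conjI)
        show "\<exists>j. i \<le> j \<and> j \<le> i+2 \<and> tiled h \<sigma> j = A" using b by (intro exI[of _ "i+2"]) simp
        show "\<exists>j. i \<le> j \<and> j \<le> i+2 \<and> tiled h \<sigma> j = B" using a by (intro exI[of _ "i"]) simp
      qed
    next
      case 3
      have a: "tiled h \<sigma> i = (if odd t then A else B)"
        using tiled_decomp[OF tl, of \<sigma> q] iq 3 by simp
      have b: "tiled h \<sigma> (i+1) = (if odd (t+1) then A else B)"
        using tiled_decomp[OF 3(2), of \<sigma> q] iq 3 by (simp add: add.assoc)
      show ?thesis
      proof (cases "odd t")
        case True
        show ?thesis
        proof (intro conjI)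
          show "\<exists>j. i \<le> j \<and> j \<le> i+2 \<and> tiled h \<sigma> j = A" using a True by (intro exI[of _ "i"]) simp
          show "\<exists>j. i \<le> j \<and> j \<le> i+2 \<and> tiled h \<sigma> j = B" using b True by (intro exI[of _ "i+1"]) simp
        qed
      next
        case False
        show ?thesis
        proof (intro conjI)
          show "\<exists>j. i \<le> j \<and> j \<le> i+2 \<and> tiled h \<sigma> j = A" using b False by (intro exI[of _ "i+1"]) simp
          show "\<exists>j. i \<le> j \<and> j \<le> i+2 \<and> tiled h \<sigma> j = B" using a False by (intro exI[of _ "i"]) simp
        qed
      qed
    qed
    then show "\<exists>j. i \<le> j \<and> j \<le> i+2 \<and> tiled h \<sigma> j = A" "\<exists>j. i \<le> j \<and> j \<le> i+2 \<and> tiled h \<sigma> j = B"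
      by blast+
  qed
  show "\<exists>j. i \<le> j \<and> j \<le> i + 2 \<and> ?w!j = c"
    using hasA hasB nth by (cases c) auto
qed

lemma L_shape_tiled_even:
  assumes h: "odd h" "3 \<le> h" and N: "even N" "0 < N"
  shows "L_shape (tiled_word h even (N*h))"
  unfolding L_shape_def
proof (intro conjI impI allI)
  let ?w = "tiled_word h even (N*h)"
  have h0: "0 < h" using h by simp
  have Nh: "0 < N*h" using N h0 by simp
  show "?w!0 = A" using Nh by (simp add: tiled_def)
  have "N*h = (N-1)*h + h" using N by (cases N) auto
  then have e1: "N*h - 1 = (N-1)*h + (h-1)" using h0 by linarith
  have e2: "tiled h even (N*h - 1) = B" unfolding e1
    using tiled_decomp[of "h-1" h even "N-1"] h by simp
  have e3: "?w!(N*h-1) = tiled h even (N*h-1)" using Nh by simp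
  show "?w!(length ?w - 1) = B" using e2 e3 by simp
  show "even (length ?w)" using N by simp
  fix j assume j: "odd j" "j+1 < length ?w"
  then have jl: "j + 1 < N*h" by simp
  define t where "t = j mod h"
  define c where "c = j div h"
  have tl: "t < h" unfolding t_def using h0 by simp
  have jq: "j = c*h + t" unfolding c_def t_def by simp
  have par: "odd c \<noteq> odd t" using j(1) h unfolding jq by simp
  have "tiled h even j \<noteq> tiled h even (j+1)"
  proof (cases "t + 1 < h")
    case True
    have a: "tiled h even j = (if t = 0 then (if even c then A else B) else if odd t then A else B)"
      using tiled_decomp[OF tl, of even c] jq by simp
    have b: "tiled h even (j+1) = (if odd (t+1) then A else B)"
      using tiled_decomp[OF True, of even c] jq by (simp add: add.assoc)
    show ?thesis using a b par by auto
  next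
    case False
    then have t1: "t = h - 1" using tl by simp
    have a: "tiled h even j = B" using tiled_decomp[OF tl, of even c] jq t1 h by simp
    have "j + 1 = Suc c * h + 0" using jq t1 h0 by simp
    then have b: "tiled h even (j+1) = (if even (Suc c) then A else B)"
      using tiled_decomp[OF h0, of even "Suc c"] by simp
    have "even (h - 1)" using h by simp
    then have "odd c" using par t1 by simp
    then show ?thesis using a b by simp
  qed
  then show "?w!j \<noteq> ?w!(j+1)" using jl by simp
qed

text \<open>Markers alternate up to tile 2m and again after it, but tiles 2m and 2m+1 both carry
  A; this doubling sits at an odd position.\<close>

definition flip_after :: "nat \<Rightarrow> nat \<Rightarrow> bool" where
  "flip_after m c \<longleftrightarrow> (if c \<le> 2*m then even c else odd c)"

lemma not_L_shape_tiled_flipped: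
  assumes h: "odd h" "3 \<le> h" and m: "0 < m"
  shows "\<not> L_shape (tiled_word h (flip_after m) ((4*m+1)*h))"
proof
  assume P: "L_shape (tiled_word h (flip_after m) ((4*m+1)*h))"
  define j where "j = (2*m+1)*h"
  have jl: "j + 1 < (4*m+1)*h"
  proof -
    have "(4*m+1)*h = j + 2*m*h" "2*h \<le> 2*m*h" unfolding j_def
      using m by (simp_all add: algebra_simps)
    then show ?thesis using h by linarith
  qed
  moreover have "odd j" unfolding j_def using h by simp
  ultimately have "tiled h (flip_after m) j \<noteq> tiled h (flip_after m) (j+1)"
    using P unfolding L_shape_def by auto
  moreover have "tiled h (flip_after m) j = A" "tiled h (flip_after m) (j+1) = A"
    using tiled_decomp[of 0 h "flip_after m" "2*m+1"] tiled_decomp[of 1 h "flip_after m" "2*m+1"] h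
    unfolding j_def flip_after_def by simp_all
  ultimately show False by simp
qed

lemma tiled_add_period:
  assumes "0 < h"
  shows "tiled h \<sigma> (i + h) =
    (if i mod h = 0 then (if \<sigma> (Suc (i div h)) then A else B) else if odd (i mod h) then A else B)"
  using assms unfolding tiled_def by (simp add: div_add_self2)

lemma tiled_padded_pair:
  assumes h: "0 < h" and sizes: "Suc K * Q + 3*K + 10 \<le> 2*m*h" "3*K + 8 \<le> Q"
  shows "padded_pair (tiled_word h even (4*m*h)) (tiled_word h (flip_after m) ((4*m+1)*h)) h (2*m*h) Q K"
proof
  have len: "4*m*h = 2*(2*m*h)" "(4*m+1)*h = 2*(2*m*h) + h" by (simp_all add: algebra_simps)
  show "length (tiled_word h (flip_after m) ((4*m+1)*h)) = length (tiled_word h even (4*m*h)) + h"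
    using len by simp
  fix i
  show "tiled_word h even (4*m*h) ! i = tiled_word h (flip_after m) ((4*m+1)*h) ! i" if i: "i < 2*m*h"
  proof -
    have "i div h < 2*m" using i by (rule less_mult_imp_div_less)
    then show ?thesis using i len by (simp add: tiled_def flip_after_def)
  qed
  show "tiled_word h even (4*m*h) ! i = tiled_word h (flip_after m) ((4*m+1)*h) ! (i + h)"
    if i: "length (tiled_word h even (4*m*h)) \<le> i + 2*m*h" "i < length (tiled_word h even (4*m*h))"
  proof -
    have "2*m*h \<le> i" using i len by (simp add: ac_simps)
    then have "(2*m*h) div h \<le> i div h" by (rule div_le_mono)
    then have "2*m \<le> i div h" using h by simp
    then show ?thesis
      using i len tiled_add_period[OF h, of "flip_after m" i]
        by (simp add: tiled_def flip_after_def)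
  qed
qed (use sizes in \<open>simp_all add: algebra_simps\<close>)

lemma tiled_covered_padded_pair:
  assumes hmQ: "h = 6*K+9" "m = 2*K+4" "Q = 3*h+4"
  shows "covered_padded_pair (tiled_word h even (4*m*h)) (tiled_word h (flip_after m) ((4*m+1)*h))
           h (2*m*h) Q K"
proof -
  let ?u = "tiled_word h even (4*m*h)"
  have sizes: "Suc K * Q + 3*K + 10 \<le> 2*m*h" "3*K + 8 \<le> Q"
    unfolding hmQ by (simp_all add: algebra_simps)
  interpret padded_pair ?u "tiled_word h (flip_after m) ((4*m+1)*h)" h "2*m*h" Q K
    by (rule tiled_padded_pair) (use hmQ sizes in simp_all)
  have hr: "2 * radius k < h" and rZ: "radius k + 5 \<le> width k"
    and big: "width (Suc k) + radius (Suc k) + 7 \<le> 2*m*h" if "k < K" for k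
    using that radius_le_Q[of k] Q_le_width[of k] width_radius_le[of "Suc k"] hmQ
    unfolding radius_def by simp_all
  have ZS: "width (Suc k) = width k + 3*h + 4" and rS: "radius (Suc k) = radius k + 3" for k
    using width_Suc hmQ unfolding radius_def by simp_all
  have len: "length ?u = 2*(2*m*h)" by (simp add: algebra_simps)
  have prefix: "\<exists>r. width k \<le> r \<and> r + 4 \<le> width (Suc k) \<and> window_eq (radius k) (tiled_word h \<sigma> n) q ?u r"
    if k: "k < K" and q: "width k \<le> q" "q + width k < n" for k q n \<sigma>
  proof -
    have "radius k \<le> q" "q + radius k < n" "radius k \<le> width k"
      "width k + 3*h + radius k \<le> 4*m*h"
        using q rZ[OF k] big[OF k] ZS[of k] rS[of k] len by linarith+
    from tiled_cover[OF hr[OF k] this] obtain x where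
      x: "width k \<le> x" "x < width k + 3*h" "window_eq (radius k) (tiled_word h \<sigma> n) q ?u x" by blast
    moreover have "x + 4 \<le> width (Suc k)" using x(2) ZS[of k] by linarith
    ultimately show ?thesis by blast
  qed
  have suffix: "\<exists>r. length ?u + 4 \<le> r + width (Suc k) \<and> r + width k < length ?u
      \<and> window_eq (radius k) (tiled_word h \<sigma> n) q ?u r"
    if k: "k < K" and q: "width k \<le> q" "q + width k < n" for k q n \<sigma>
  proof -
    define lo where "lo = length ?u + 4 - width (Suc k)"
    have "radius k \<le> q" "q + radius k < n" "radius k \<le> lo" "lo + 3*h + radius k \<le> 4*m*h"
      unfolding lo_def using q rZ[OF k] big[OF k] ZS[of k] rS[of k] len by linarith+
    from tiled_cover[OF hr[OF k] this] obtain x where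
      x: "lo \<le> x" "x < lo + 3*h" "window_eq (radius k) (tiled_word h \<sigma> n) q ?u x" by blast
    moreover have "length ?u + 4 \<le> x + width (Suc k)" "x + width k < length ?u"
      using x(1,2) big[OF k] ZS[of k] len unfolding lo_def by linarith+
    ultimately show ?thesis by blast
  qed
  show ?thesis
  proof (intro covered_padded_pair.intro padded_pair_axioms covered_padded_pair_axioms.intro)
  qed (use prefix[of _ _ "4*m*h" even] prefix[of _ _ "(4*m+1)*h" "flip_after m"]
         suffix[of _ _ "4*m*h" even] suffix[of _ _ "(4*m+1)*h" "flip_after m"] in simp_all)
qed

lemma ef_equiv_witnesses:
  obtains u v where "u \<in> L_lang" "v \<notin> L_lang" "u \<noteq> []" "v \<noteq> []"
    "dense_letters u" "dense_letters v" "ef_equiv K u 0 v 0"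
proof -
  define h where "h = 6*K+9"
  define m where "m = 2*K+4"
  have h: "odd h" "3 \<le> h" and m: "0 < m" unfolding h_def m_def by simp_all
  interpret covered_padded_pair "tiled_word h even (4*m*h)" "tiled_word h (flip_after m) ((4*m+1)*h)"
    h "2*m*h" "3*h+4" K
    by (rule tiled_covered_padded_pair) (simp_all add: h_def m_def)
  have "tiled_word h even (4*m*h) \<in> L_lang"
    using L_shape_tiled_even[OF h, of "4*m"] m
      unfolding L_lang_iff_L_shape by (simp add: mult.assoc)
  moreover have "tiled_word h (flip_after m) ((4*m+1)*h) \<notin> L_lang"
    using not_L_shape_tiled_flipped[OF h m] unfolding L_lang_iff_L_shape .
  moreover have "tiled_word h even (4*m*h) \<noteq> []" "tiled_word h (flip_after m) ((4*m+1)*h) \<noteq> []"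
    using h m by (simp_all flip: length_greater_0_conv)
  ultimately show thesis
    using that[OF _ _ _ _ dense_letters_tiled[OF h] dense_letters_tiled[OF h] ef_equiv_start] by blast
qed

theorem not_fo2_inv_definable_L_lang: "\<not> fo2_inv_definable L_lang"
proof
  assume "fo2_inv_definable L_lang"
  then obtain \<phi> where \<phi>: "\<And>w. w \<in> L_lang \<longleftrightarrow> fo2_sat w (\<lambda>_. 0) \<phi>"
    unfolding fo2_inv_definable_def by blast
  obtain u v where uv: "u \<in> L_lang" "v \<notin> L_lang"
    and "u \<noteq> []" "v \<noteq> []" "dense_letters u" "dense_letters v" "ef_equiv (qdepth \<phi>) u 0 v 0"
    by (rule ef_equiv_witnesses)
  then have "fo2_sat u (\<lambda>_. 0) \<phi> = fo2_sat v (\<lambda>_. 0) \<phi>"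
    by (intro ef_equiv_fo2_sentence) simp_all
  with uv \<phi> show False by blast
qed

theorem corollary7:
  shows "fo_definable L_lang \<and> \<not> fo2_inv_definable L_lang"
  using fo_definable_L_lang not_fo2_inv_definable_L_lang by blast

end
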